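(* Let $\kappa=\frac{\tilde\kappa\sqrt\delta}{\varepsilon}$ with $\tilde\kappa>\frac1\pi$ independent of $\varepsilon$, and assume $\varepsilon^2=o_\varepsilon(\delta)$ and $\delta=o_\varepsilon(\varepsilon)$. Let $(v_\varepsilon,\varphi_\varepsilon)$ be a minimizer of $G_{\varepsilon,\delta,\kappa}$ in $\mathcal I$ with $v_\varepsilon\ge0$, and let $\beta=\varepsilon/\sqrt\delta$. Then $$G_{\varepsilon,\delta,\kappa}(v_\varepsilon,\varphi_\varepsilon)=G_{\varepsilon,\delta,\kappa}(1,\varphi_\varepsilon)(1+o_\varepsilon(1))=\left(\inf_{\mathcal J}F_{\beta,\kappa}\right)(1+o_\varepsilon(1)).$$ If moreover $\delta=O_\varepsilon(\varepsilon^{3/2})$, then $$\int_0^1v_\varepsilon'(x)^2\,dx+\frac1{4\varepsilon^2}\int_0^1(v_\varepsilon^2(x)-1)^2\,dx=O_\varepsilon\left(\frac{\sqrt\delta}{\varepsilon}\right).$$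
   Context: For $\varepsilon,\delta,\kappa>0$ and suitable $(v,\varphi)$ on $(0,1)$ let $$G_{\varepsilon,\delta,\kappa}(v,\varphi)=\frac12\int_0^1v'^2+\frac{1}{4\varepsilon^2}\int_0^1(1-v^2)^2+\frac18\int_0^1v^2\varphi'^2+\frac{\delta}{8\varepsilon^2}\int_0^1v^4\sin^2\varphi-\frac\kappa2\int_0^1v^2\varphi'.$$ Let $\mathcal S(v)=\{x\in[0,1]:v(x)=0\}$. The admissible class $\mathcal I$ consists of pairs $(v,\varphi)$ with $v\in H^1((0,1))$, $\varphi$ of class $H^1$ on $(0,1)\setminus\mathcal S(v)$, $\varphi(0)=0$ and $\int_0^1v^2=1$; on $\mathcal S(v)$ the quantities $v^2\varphi'^2$, $v^2\varphi'$, $v^4\sin^2\varphi$ are set equal to $0$. For $\beta>0$, $F_{\beta,\kappa}(\varphi)=\frac18\int_0^1(\varphi'^2+\beta^{-2}\sin^2\varphi)-\frac\kappa2\int_0^1\varphi'$ on $\mathcal J=\{\varphi\in H^1((0,1)):\varphi(0)=0\}$. The notations $o_\varepsilon$, $O_\varepsilon$ refer to $\varepsilon\to0$. *)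

theory Defs
  imports "HOL-Analysis.Analysis" "HOL-Library.Landau_Symbols"
begin

definition is_wderiv01 :: "(real \<Rightarrow> real) \<Rightarrow> (real \<Rightarrow> real) \<Rightarrow> bool" where
  "is_wderiv01 v g \<longleftrightarrow>
     g \<in> borel_measurable lborel \<and>
     set_integrable lborel {0..1} g \<and>
     set_integrable lborel {0..1} (\<lambda>x. (g x)^2) \<and>
     (\<forall>x\<in>{0..1}. v x = v 0 + (LINT t:{0..x}|lborel. g t))"

definition H1_01 :: "(real \<Rightarrow> real) \<Rightarrow> bool" where
  "H1_01 v \<longleftrightarrow> (\<exists>g. is_wderiv01 v g)"

definition wderiv01 :: "(real \<Rightarrow> real) \<Rightarrow> (real \<Rightarrow> real)" where
  "wderiv01 v = (SOME g. is_wderiv01 v g)"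

definition zset :: "(real \<Rightarrow> real) \<Rightarrow> real set" where
  "zset v = {x\<in>{0..1}. v x = 0}"

definition is_wderiv_on :: "real set \<Rightarrow> (real \<Rightarrow> real) \<Rightarrow> (real \<Rightarrow> real) \<Rightarrow> bool" where
  "is_wderiv_on U phi g \<longleftrightarrow>
     g \<in> borel_measurable lborel \<and>
     phi \<in> borel_measurable lborel \<and>
     set_integrable lborel U (\<lambda>x. (phi x)^2) \<and>
     set_integrable lborel U (\<lambda>x. (g x)^2) \<and>
     (\<forall>a b. a \<le> b \<and> {a..b} \<subseteq> U \<longrightarrow>
        set_integrable lborel {a..b} g \<and> phi b - phi a = (LINT t:{a..b}|lborel. g t))"

definition wderiv_on :: "real set \<Rightarrow> (real \<Rightarrow> real) \<Rightarrow> (real \<Rightarrow> real)" where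
  "wderiv_on U phi = (SOME g. is_wderiv_on U phi g)"

definition admissible :: "(real \<Rightarrow> real) \<Rightarrow> (real \<Rightarrow> real) \<Rightarrow> bool" where
  "admissible v phi \<longleftrightarrow>
     H1_01 v \<and>
     (\<exists>g. is_wderiv_on ({0..1} - zset v) phi g) \<and>
     phi 0 = 0 \<and>
     (LINT x:{0..1}|lborel. (v x)^2) = 1"

definition G :: "real \<Rightarrow> real \<Rightarrow> real \<Rightarrow> (real \<Rightarrow> real) \<Rightarrow> (real \<Rightarrow> real) \<Rightarrow> real" where
  "G \<epsilon> \<delta> \<kappa> v phi =
     (let U = {0..1} - zset v; dv = wderiv01 v; dphi = wderiv_on U phi in
       1/2 * (LINT x:{0..1}|lborel. (dv x)^2)
     + 1/(4*\<epsilon>^2) * (LINT x:{0..1}|lborel. (1 - (v x)^2)^2)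
     + 1/8 * (LINT x:U|lborel. (v x)^2 * (dphi x)^2)
     + \<delta>/(8*\<epsilon>^2) * (LINT x:U|lborel. (v x)^4 * (sin (phi x))^2)
     - \<kappa>/2 * (LINT x:U|lborel. (v x)^2 * dphi x))"

definition J_class :: "(real \<Rightarrow> real) set" where
  "J_class = {phi. H1_01 phi \<and> phi 0 = 0}"

definition F :: "real \<Rightarrow> real \<Rightarrow> (real \<Rightarrow> real) \<Rightarrow> real" where
  "F \<beta> \<kappa> phi =
     1/8 * (LINT x:{0..1}|lborel. (wderiv01 phi x)^2 + (sin (phi x))^2 / \<beta>^2)
     - \<kappa>/2 * (LINT x:{0..1}|lborel. wderiv01 phi x)"

end

theory Submission
  imports Defs
begin

text \<open>
  Testing G with the modulus v = 1 shows that the minimal energy is at most inf F, and inf F is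
  of order -\<kappa>^2: a train of about r/(2T) phase kinks, r = sqrt \<delta> / \<epsilon>, each rising by \<pi>, has
  F-energy of order -r^2 as soon as \<kappa>t \<pi> > 1. Conversely, completing the square yields
  G(v,\<phi>) \<ge> E(v) - \<kappa>^2/2, where E is the Ginzburg-Landau part of G, so E(v) \<le> \<kappa>^2/2 for a
  minimizer. A one-dimensional Modica-Mortola argument turns this into the uniform bound
  |v - 1| \<le> \<eta> with \<eta>^2 = 32 \<epsilon> E(v), and \<eta> = O(\<kappa> sqrt \<epsilon>) = O(sqrt (\<delta> / \<epsilon>)) is small.
  With v \<ge> 1 - \<eta> one gets G(v,\<phi>) \<ge> E(v) + (1 - \<eta>)^4 (F(\<phi>) + \<kappa>^2/2) - \<kappa>^2/2, which squeezes
  G(v,\<phi>), G(1,\<phi>) = F(\<phi>) and inf F together up to O(\<eta> \<kappa>^2), a relative error o(1). Feeding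
  E(v) = O(\<eta> \<kappa>^2) back into \<eta> gives E(v) = O(\<epsilon> \<kappa>^4) = O(\<delta>^2 / \<epsilon>^3), which is
  O(sqrt \<delta> / \<epsilon>) when \<delta> = O(\<epsilon> powr (3/2)).
\<close>

lemma set_integral_const_unit_interval: "(LINT x:{0..1::real}|lborel. (c::real)) = c"
  by (simp add: set_lebesgue_integral_def)

lemma set_integral_nonneg:
  fixes f :: "'a \<Rightarrow> real"
  shows "(\<And>x. x \<in> A \<Longrightarrow> 0 \<le> f x) \<Longrightarrow> 0 \<le> (LINT x:A|M. f x)"
  unfolding set_lebesgue_integral_def
  by (intro Bochner_Integration.integral_nonneg) (simp add: indicator_def)

lemma set_integral_mono_set:
  fixes f :: "'a \<Rightarrow> real"
  assumes f: "set_integrable M B f" and A: "A \<in> sets M" "A \<subseteq> B"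
    and nonneg: "\<And>x. x \<in> B \<Longrightarrow> 0 \<le> f x"
  shows "(LINT x:A|M. f x) \<le> (LINT x:B|M. f x)"
proof -
  have "set_integrable M A f" by (rule set_integrable_subset[OF f A])
  then show ?thesis
    unfolding set_lebesgue_integral_def set_integrable_def
    by (intro Bochner_Integration.integral_mono)
      (use f A nonneg in \<open>auto simp: set_integrable_def indicator_def\<close>)
qed

lemma set_integral_cong_unit_interval:
  assumes "A \<subseteq> {0..1}" "\<And>x. x \<in> {0..1} \<Longrightarrow> f x = g x"
  shows "(LINT x:A|lborel. f x) = (LINT x:A|lborel. (g x :: real))"
  unfolding set_lebesgue_integral_def
  by (rule Bochner_Integration.integral_cong) (use assms in \<open>auto simp: indicator_def\<close>)

lemma set_integrable_bounded_mult:
  fixes f g :: "'a \<Rightarrow> real"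
  assumes f: "set_integrable M A f" and g: "g \<in> borel_measurable M"
    and bound: "\<And>x. x \<in> A \<Longrightarrow> \<bar>g x\<bar> \<le> B"
  shows "set_integrable M A (\<lambda>x. g x * f x)"
proof (rule set_integrable_bound)
  show "set_integrable M A (\<lambda>x. B * \<bar>f x\<bar>)"
    using set_integrable_norm[OF f] by simp
  have "(\<lambda>x. indicator A x * f x) \<in> borel_measurable M"
    using f unfolding set_integrable_def by simp
  then have "(\<lambda>x. g x * (indicator A x * f x)) \<in> borel_measurable M" using g by measurable
  then show "set_borel_measurable M A (\<lambda>x. g x * f x)"
    unfolding set_borel_measurable_def by (simp add: mult.left_commute)
  have "\<bar>g x\<bar> * \<bar>f x\<bar> \<le> \<bar>B\<bar> * \<bar>f x\<bar>" if "x \<in> A" for x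
    using bound[OF that] by (intro mult_right_mono) auto
  then show "AE x in M. x \<in> A \<longrightarrow> norm (g x * f x) \<le> norm (B * \<bar>f x\<bar>)"
    by (intro AE_I2) (simp add: abs_mult)
qed

lemma set_integrable_if_sq:
  fixes f :: "'a \<Rightarrow> real"
  assumes "set_integrable M A (\<lambda>_. 1::real)" "set_integrable M A (\<lambda>x. (f x)^2)"
    and "f \<in> borel_measurable M"
  shows "set_integrable M A f"
proof (rule set_integrable_bound[OF set_integral_add(1)[OF assms(1,2)]])
  have "(\<lambda>x. indicator A x *\<^sub>R (1::real)) \<in> borel_measurable M"
    using assms(1) unfolding set_integrable_def by (rule borel_measurable_integrable)
  then show "set_borel_measurable M A f"
    unfolding set_borel_measurable_def using assms(3) by simp
  have "\<bar>f x\<bar> \<le> 1 + (f x)^2" for x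
  proof -
    have "0 \<le> (\<bar>f x\<bar> - 1)^2" by simp
    then have "2 * \<bar>f x\<bar> \<le> 1 + \<bar>f x\<bar>^2" by (simp add: power2_eq_square algebra_simps)
    then show ?thesis by simp
  qed
  then show "AE x in M. x \<in> A \<longrightarrow> norm (f x) \<le> norm (1 + (f x)^2)" by (intro AE_I2) simp
qed

lemma set_integral_weighted_square:
  fixes w p :: "'a \<Rightarrow> real"
  assumes "set_integrable M A (\<lambda>x. w x * (p x)^2)" "set_integrable M A (\<lambda>x. w x * p x)"
    "set_integrable M A w"
  shows "set_integrable M A (\<lambda>x. w x * (p x - c)^2)"
    "(LINT x:A|M. w x * (p x - c)^2)
    = (LINT x:A|M. w x * (p x)^2) - 2 * c * (LINT x:A|M. w x * p x) + c^2 * (LINT x:A|M. w x)"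
proof -
  have eq: "(\<lambda>x. w x * (p x - c)^2) = (\<lambda>x. w x * (p x)^2 - 2 * c * (w x * p x) + c^2 * w x)"
    by (simp add: power2_eq_square algebra_simps)
  show "set_integrable M A (\<lambda>x. w x * (p x - c)^2)"
    unfolding eq using assms by (simp add: set_integral_add set_integral_diff)
  show "(LINT x:A|M. w x * (p x - c)^2)
    = (LINT x:A|M. w x * (p x)^2) - 2 * c * (LINT x:A|M. w x * p x) + c^2 * (LINT x:A|M. w x)"
    unfolding eq using assms by (simp add: set_integral_add set_integral_diff)
qed

lemma continuous_on_unit_interval_bounded:
  fixes v :: "real \<Rightarrow> real"
  assumes "continuous_on {0..1} v"
  obtains K where "\<And>x. x \<in> {0..1} \<Longrightarrow> \<bar>v x\<bar> \<le> K"
proof -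
  have "bounded (v ` {0..1})"
    by (intro compact_imp_bounded compact_continuous_image assms) simp
  then obtain K where "\<forall>y\<in>v ` {0..1}. norm y \<le> K" unfolding bounded_iff by blast
  then have "\<And>x. x \<in> {0..1} \<Longrightarrow> \<bar>v x\<bar> \<le> K" by simp
  then show ?thesis by (rule that)
qed

lemma emeasure_density_greaterThan:
  fixes f :: "real \<Rightarrow> real"
  assumes "integrable lborel f" "\<And>x. 0 \<le> f x"
  shows "emeasure (density lborel f) {c<..} = ennreal (LINT x:{c<..}|lborel. f x)"
proof -
  have [measurable]: "f \<in> borel_measurable lborel" using assms(1) by auto
  have "emeasure (density lborel f) {c<..} = (\<integral>\<^sup>+x. ennreal (indicator {c<..} x * f x) \<partial>lborel)"
    by (subst emeasure_density) (auto intro!: nn_integral_cong split: split_indicator)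
  also have "\<dots> = ennreal (LINT x:{c<..}|lborel. f x)"
  proof -
    have "integrable lborel (\<lambda>x. indicator {c<..} x *\<^sub>R f x)"
      by (rule integrable_mult_indicator) (simp_all add: assms(1))
    then show ?thesis
      unfolding set_lebesgue_integral_def using assms(2) by (simp add: nn_integral_eq_integral)
  qed
  finally show ?thesis .
qed

lemma AE_zero_if_set_integrals_greaterThan_zero:
  fixes h :: "real \<Rightarrow> real"
  assumes h: "integrable lborel h" and zero: "\<And>c. (LINT x:{c<..}|lborel. h x) = 0"
  shows "AE x in lborel. h x = 0"
proof -
  have [measurable]: "h \<in> borel_measurable lborel" using h by auto
  define hp hn where "hp x = max 0 (h x)" and "hn x = max 0 (- h x)" for x
  have hp: "integrable lborel hp" and hn: "integrable lborel hn"
    unfolding hp_def hn_def using h by (auto intro: integrable_max)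
  have "(LINT x:{c<..}|lborel. hp x) = (LINT x:{c<..}|lborel. hn x)" for c
  proof -
    have "set_integrable lborel {c<..} hp" "set_integrable lborel {c<..} hn"
      unfolding set_integrable_def by (rule integrable_mult_indicator, simp, fact)+
    then have "(LINT x:{c<..}|lborel. hp x) - (LINT x:{c<..}|lborel. hn x)
        = (LINT x:{c<..}|lborel. hp x - hn x)"
      by (rule set_integral_diff(2)[symmetric])
    also have "\<dots> = (LINT x:{c<..}|lborel. h x)"
      by (rule set_lebesgue_integral_cong) (auto simp: hp_def hn_def)
    finally show ?thesis using zero by simp
  qed
  moreover have "0 \<le> hp x" "0 \<le> hn x" for x by (simp_all add: hp_def hn_def)
  ultimately have "density lborel hp = density lborel hn"
    by (intro measure_eqI_lessThan) (simp_all add: emeasure_density_greaterThan hp hn)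
  then have "AE x in lborel. ennreal (hp x) = ennreal (hn x)"
    by (intro sigma_finite_measure.density_unique[OF sigma_finite_lborel]) (auto simp: hp_def hn_def)
  then show ?thesis
    by eventually_elim (simp add: hp_def hn_def max_def split: if_splits)
qed

section \<open>Weak derivatives on the unit interval\<close>

lemma is_wderiv01D:
  assumes "is_wderiv01 v g"
  shows "g \<in> borel_measurable lborel" "set_integrable lborel {0..1} g"
    "set_integrable lborel {0..1} (\<lambda>x. (g x)^2)"
    "\<And>x. x \<in> {0..1} \<Longrightarrow> v x = v 0 + (LINT t:{0..x}|lborel. g t)"
  using assms unfolding is_wderiv01_def by blast+

lemma is_wderiv01_integral:
  assumes "is_wderiv01 v g" "x \<in> {0..1}"
  shows "g integrable_on {0..x}" "v x = v 0 + integral {0..x} g"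
proof -
  have "set_integrable lborel {0..x} g"
    by (rule set_integrable_subset[OF is_wderiv01D(2)[OF assms(1)]]) (use assms(2) in simp_all)
  then show "g integrable_on {0..x}" "v x = v 0 + integral {0..x} g"
    using is_wderiv01D(4)[OF assms] set_borel_integral_eq_integral by simp_all
qed

lemma is_wderiv01_interval:
  assumes "is_wderiv01 v g" "0 \<le> a" "a \<le> b" "b \<le> 1"
  shows "set_integrable lborel {a..b} g" "(LINT t:{a..b}|lborel. g t) = v b - v a"
proof -
  show si: "set_integrable lborel {a..b} g"
    by (rule set_integrable_subset[OF is_wderiv01D(2)[OF assms(1)]]) (use assms(2-4) in simp_all)
  have "integral {0..a} g + integral {a..b} g = integral {0..b} g"
    using Henstock_Kurzweil_Integration.integral_combine[OF assms(2,3)]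
      is_wderiv01_integral(1)[OF assms(1), of b] assms(2-4) by simp
  moreover have "v a = v 0 + integral {0..a} g" "v b = v 0 + integral {0..b} g"
    using is_wderiv01_integral(2)[OF assms(1), of a] is_wderiv01_integral(2)[OF assms(1), of b]
      assms(2-4) by simp_all
  ultimately show "(LINT t:{a..b}|lborel. g t) = v b - v a"
    using set_borel_integral_eq_integral(2)[OF si] by simp
qed

lemma is_wderiv01_continuous_on:
  assumes "is_wderiv01 v g"
  shows "continuous_on {0..1} v"
proof -
  have "continuous_on {0..1} (\<lambda>x. v 0 + integral {0..x} g)"
    using is_wderiv01_integral(1)[OF assms, of 1]
    by (intro continuous_intros indefinite_integral_continuous_1) simp
  then show ?thesis
    by (rule continuous_on_eq) (metis is_wderiv01_integral(2)[OF assms])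
qed

lemma is_wderiv01_integral_greaterThan:
  assumes w: "is_wderiv01 v g"
  shows "(LINT x:{c<..}|lborel. indicator {0..1} x * g x) = v 1 - v (min 1 (max 0 c))"
proof -
  define a where "a = min 1 (max 0 c)"
  have a: "0 \<le> a" "a \<le> 1" unfolding a_def by simp_all
  have int01: "set_integrable lborel {0..1} g" by (rule is_wderiv01D(2)[OF w])
  have "(LINT x:{c<..}|lborel. indicator {0..1} x * g x) = (LINT x:{c<..} \<inter> {0..1}|lborel. g x)"
    unfolding set_lebesgue_integral_def
    by (rule Bochner_Integration.integral_cong) (simp_all add: indicator_def)
  also have "\<dots> = (LINT x:{a..1}|lborel. g x)"
  proof (rule set_integral_cong_set)
    show "set_borel_measurable lborel ({c<..} \<inter> {0..1}) g" "set_borel_measurable lborel {a..1} g"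
      using set_integrable_subset[OF int01] a
      by (auto simp: set_borel_measurable_def set_integrable_def)
    show "AE x in lborel. (x \<in> {a..1}) = (x \<in> {c<..} \<inter> {0..1})"
      using AE_lborel_singleton[of a] by eventually_elim (auto simp: a_def)
  qed
  also have "\<dots> = v 1 - v a" by (rule is_wderiv01_interval(2)[OF w a]) simp
  finally show ?thesis unfolding a_def .
qed

lemma is_wderiv01_unique_AE:
  assumes w1: "is_wderiv01 v g1" and w2: "is_wderiv01 v g2"
  shows "AE x in lborel. x \<in> {0..1} \<longrightarrow> g1 x = g2 x"
proof -
  define f1 f2 :: "real \<Rightarrow> real"
    where "f1 = (\<lambda>x. indicator {0..1} x * g1 x)" and "f2 = (\<lambda>x. indicator {0..1} x * g2 x)"
  have f1: "integrable lborel f1" and f2: "integrable lborel f2"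
    using is_wderiv01D(2)[OF w1] is_wderiv01D(2)[OF w2]
    by (simp_all add: set_integrable_def f1_def f2_def)
  have "(LINT x:{c<..}|lborel. f1 x - f2 x) = 0" for c
  proof -
    have "set_integrable lborel {c<..} f1" "set_integrable lborel {c<..} f2"
      unfolding set_integrable_def
      using integrable_mult_indicator[of "{c<..}" lborel f1] integrable_mult_indicator[of "{c<..}" lborel f2]
        f1 f2 by simp_all
    then have "(LINT x:{c<..}|lborel. f1 x - f2 x)
        = (LINT x:{c<..}|lborel. f1 x) - (LINT x:{c<..}|lborel. f2 x)"
      by (rule set_integral_diff(2))
    then show ?thesis
      unfolding f1_def f2_def
      using is_wderiv01_integral_greaterThan[OF w1, of c] is_wderiv01_integral_greaterThan[OF w2, of c]
      by linarith
  qed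
  then have "AE x in lborel. f1 x - f2 x = 0"
    by (intro AE_zero_if_set_integrals_greaterThan_zero) (use f1 f2 in auto)
  then show ?thesis by eventually_elim (simp add: f1_def f2_def indicator_def)
qed

lemma is_wderiv01_wderiv01: "H1_01 v \<Longrightarrow> is_wderiv01 v (wderiv01 v)"
  unfolding H1_01_def wderiv01_def by (metis someI_ex)

lemma is_wderiv_on_wderiv_on: "\<exists>g. is_wderiv_on U v g \<Longrightarrow> is_wderiv_on U v (wderiv_on U v)"
  unfolding wderiv_on_def by (metis someI_ex)

lemma H1_01I: "is_wderiv01 v g \<Longrightarrow> H1_01 v"
  unfolding H1_01_def by blast

lemma is_wderiv01_const: "is_wderiv01 (\<lambda>_. c) (\<lambda>_. 0)"
  unfolding is_wderiv01_def by (simp add: set_integrable_def)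

lemma set_integral_wderiv01:
  assumes "H1_01 v"
  shows "(LINT x:{0..1}|lborel. wderiv01 v x) = v 1 - v 0"
  using is_wderiv01_interval(2)[OF is_wderiv01_wderiv01[OF assms], of 0 1] by simp

lemma set_integral_wderiv01_sq:
  assumes w: "is_wderiv01 v g"
  shows "(LINT x:{0..1}|lborel. (wderiv01 v x)^2) = (LINT x:{0..1}|lborel. (g x)^2)"
proof -
  have w': "is_wderiv01 v (wderiv01 v)" by (rule is_wderiv01_wderiv01[OF H1_01I[OF w]])
  have [measurable]: "wderiv01 v \<in> borel_measurable lborel" "g \<in> borel_measurable lborel"
    using is_wderiv01D(1)[OF w'] is_wderiv01D(1)[OF w] .
  show ?thesis
    by (rule set_lebesgue_integral_cong_AE)
      (use is_wderiv01_unique_AE[OF w' w] in \<open>auto elim!: eventually_mono\<close>)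
qed

lemma set_integral_wderiv01_const_sq: "(LINT x:{0..1}|lborel. (wderiv01 (\<lambda>_. c) x)^2) = 0"
  using set_integral_wderiv01_sq[OF is_wderiv01_const] by simp

lemma is_wderiv01_cong:
  assumes "\<And>x. x \<in> {0..1} \<Longrightarrow> v x = w x"
  shows "is_wderiv01 v = is_wderiv01 w"
  using assms unfolding is_wderiv01_def by (intro ext) (metis atLeastAtMost_iff order_refl zero_le_one)

lemma wderiv01_cong:
  assumes "\<And>x. x \<in> {0..1} \<Longrightarrow> v x = w x"
  shows "wderiv01 v = wderiv01 w" "H1_01 v = H1_01 w"
proof -
  have eq: "is_wderiv01 v = is_wderiv01 w" by (rule is_wderiv01_cong[OF assms])
  show "wderiv01 v = wderiv01 w" unfolding wderiv01_def eq ..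
  show "H1_01 v = H1_01 w" unfolding H1_01_def eq ..
qed

lemma is_wderiv01_if_is_wderiv_on:
  assumes "is_wderiv_on {0..1} \<psi> g"
  shows "is_wderiv01 \<psi> g"
proof -
  have segment: "set_integrable lborel {a..b} g \<and> \<psi> b - \<psi> a = (LINT t:{a..b}|lborel. g t)"
    if "a \<le> b \<and> {a..b} \<subseteq> {0..1}" for a b
    using assms that unfolding is_wderiv_on_def by blast
  have "\<psi> x = \<psi> 0 + (LINT t:{0..x}|lborel. g t)" if "x \<in> {0..1}" for x
    using segment[of 0 x] that by simp
  moreover have "set_integrable lborel {0..1} g" using segment[of 0 1] by simp
  ultimately show ?thesis
    using assms unfolding is_wderiv_on_def is_wderiv01_def by blast
qed

lemma is_wderiv_on_if_is_wderiv01: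
  assumes "is_wderiv01 \<psi> g" "\<psi> \<in> borel_measurable lborel"
    "set_integrable lborel {0..1} (\<lambda>x. (\<psi> x)^2)"
  shows "is_wderiv_on {0..1} \<psi> g"
proof -
  have "set_integrable lborel {a..b} g \<and> \<psi> b - \<psi> a = (LINT t:{a..b}|lborel. g t)"
    if "a \<le> b" "{a..b} \<subseteq> {0..1}" for a b
    using is_wderiv01_interval[OF assms(1), of a b] that by auto
  then show ?thesis unfolding is_wderiv_on_def using is_wderiv01D[OF assms(1)] assms(2,3) by blast
qed

lemma wderiv_on_unit_interval:
  assumes "\<psi> \<in> borel_measurable lborel" "set_integrable lborel {0..1} (\<lambda>x. (\<psi> x)^2)"
  shows "wderiv_on {0..1} \<psi> = wderiv01 \<psi>"
proof -
  have "is_wderiv_on {0..1} \<psi> = is_wderiv01 \<psi>"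
    using is_wderiv01_if_is_wderiv_on is_wderiv_on_if_is_wderiv01[OF _ assms] by blast
  then show ?thesis unfolding wderiv_on_def wderiv01_def by simp
qed

section \<open>The functional F and the comparison with G\<close>

lemma set_integrable_sin_sq:
  fixes \<psi> :: "real \<Rightarrow> real"
  assumes "continuous_on {0..1} \<psi>"
  shows "set_integrable lborel {0..1::real} (\<lambda>x. (sin (\<psi> x))^2 * c)"
  by (intro borel_integrable_atLeastAtMost' continuous_intros assms)

lemma F_eq:
  assumes "H1_01 \<psi>"
  shows "F \<beta> \<kappa> \<psi> = 1/8 * (LINT x:{0..1}|lborel. (wderiv01 \<psi> x)^2)
     + 1/8 * (1/\<beta>^2) * (LINT x:{0..1}|lborel. (sin (\<psi> x))^2)
     - \<kappa>/2 * (LINT x:{0..1}|lborel. wderiv01 \<psi> x)"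
proof -
  have w: "is_wderiv01 \<psi> (wderiv01 \<psi>)" by (rule is_wderiv01_wderiv01[OF assms])
  have "(LINT x:{0..1}|lborel. (wderiv01 \<psi> x)^2 + (sin (\<psi> x))^2 / \<beta>^2)
      = (LINT x:{0..1}|lborel. (wderiv01 \<psi> x)^2) + (LINT x:{0..1}|lborel. (sin (\<psi> x))^2 * (1/\<beta>^2))"
    using set_integral_add(2)[OF is_wderiv01D(3)[OF w]
        set_integrable_sin_sq[OF is_wderiv01_continuous_on[OF w], of "1/\<beta>^2"]]
    by (simp add: divide_inverse)
  then show ?thesis unfolding F_def by (simp add: algebra_simps)
qed

lemma F_plus_eq:
  assumes "H1_01 \<psi>"
  shows "F \<beta> \<kappa> \<psi> + \<kappa>^2 / 2
    = (LINT x:{0..1}|lborel. (wderiv01 \<psi> x - 2 * \<kappa>)^2 / 8 + (sin (\<psi> x))^2 / (8 * \<beta>^2))"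
    and "set_integrable lborel {0..1}
      (\<lambda>x. (wderiv01 \<psi> x - 2 * \<kappa>)^2 / 8 + (sin (\<psi> x))^2 / (8 * \<beta>^2))"
proof -
  have w: "is_wderiv01 \<psi> (wderiv01 \<psi>)" by (rule is_wderiv01_wderiv01[OF assms])
  have one: "set_integrable lborel {0..1::real} (\<lambda>_. 1::real)" by (simp add: borel_integrable_atLeastAtMost')
  note square = set_integral_weighted_square[of lborel "{0..1}" "\<lambda>_. 1" "wderiv01 \<psi>" "2 * \<kappa>"]
  have sq: "set_integrable lborel {0..1} (\<lambda>x. (wderiv01 \<psi> x - 2 * \<kappa>)^2 / 8)"
    using square(1) is_wderiv01D(2,3)[OF w] one by simp
  have sin: "set_integrable lborel {0..1} (\<lambda>x. (sin (\<psi> x))^2 * (1 / (8 * \<beta>^2)))"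
    by (rule set_integrable_sin_sq[OF is_wderiv01_continuous_on[OF w]])
  have "(LINT x:{0..1}|lborel. (wderiv01 \<psi> x - 2 * \<kappa>)^2 / 8 + (sin (\<psi> x))^2 / (8 * \<beta>^2))
      = (LINT x:{0..1}|lborel. (wderiv01 \<psi> x - 2 * \<kappa>)^2) / 8
        + 1/8 * (1/\<beta>^2) * (LINT x:{0..1}|lborel. (sin (\<psi> x))^2)"
    using set_integral_add(2)[OF sq sin] by simp
  also have "(LINT x:{0..1}|lborel. (wderiv01 \<psi> x - 2 * \<kappa>)^2)
      = (LINT x:{0..1}|lborel. (wderiv01 \<psi> x)^2) - 4 * \<kappa> * (LINT x:{0..1}|lborel. wderiv01 \<psi> x) + 4 * \<kappa>^2"
    using square(2) is_wderiv01D(2,3)[OF w] one by (simp add: set_integral_const_unit_interval power_mult_distrib)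
  finally show "F \<beta> \<kappa> \<psi> + \<kappa>^2 / 2
    = (LINT x:{0..1}|lborel. (wderiv01 \<psi> x - 2 * \<kappa>)^2 / 8 + (sin (\<psi> x))^2 / (8 * \<beta>^2))"
    unfolding F_eq[OF assms] by (simp add: field_simps)
  show "set_integrable lborel {0..1}
      (\<lambda>x. (wderiv01 \<psi> x - 2 * \<kappa>)^2 / 8 + (sin (\<psi> x))^2 / (8 * \<beta>^2))"
    using set_integral_add(1)[OF sq sin] by simp
qed

lemma F_ge:
  assumes "H1_01 \<psi>"
  shows "- (\<kappa>^2 / 2) \<le> F \<beta> \<kappa> \<psi>"
proof -
  have "0 \<le> (LINT x:{0..1}|lborel. (wderiv01 \<psi> x - 2 * \<kappa>)^2 / 8 + (sin (\<psi> x))^2 / (8 * \<beta>^2))"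
    by (rule set_integral_nonneg) simp
  then show ?thesis using F_plus_eq(1)[OF assms, where \<beta> = \<beta> and \<kappa> = \<kappa>] by simp
qed

lemma J_class_nonempty: "J_class \<noteq> {}"
  using is_wderiv01_const[of 0] unfolding J_class_def H1_01_def by auto

lemma INF_F_ge: "- (\<kappa>^2 / 2) \<le> (INF \<psi>\<in>J_class. F \<beta> \<kappa> \<psi>)"
  by (rule cINF_greatest[OF J_class_nonempty]) (auto intro: F_ge simp: J_class_def)

lemma INF_F_le: "\<psi> \<in> J_class \<Longrightarrow> (INF \<psi>\<in>J_class. F \<beta> \<kappa> \<psi>) \<le> F \<beta> \<kappa> \<psi>"
  by (rule cINF_lower) (auto intro!: bdd_belowI2 F_ge simp: J_class_def)

lemma zset_const_one: "zset (\<lambda>_. 1) = {}"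
  unfolding zset_def by simp

lemma G_const_one_eq_F:
  assumes "\<psi> \<in> borel_measurable lborel" "set_integrable lborel {0..1} (\<lambda>x. (\<psi> x)^2)"
    and "H1_01 \<psi>" and "\<epsilon> > 0" and "\<delta> > 0"
  shows "G \<epsilon> \<delta> \<kappa> (\<lambda>_. 1) \<psi> = F (\<epsilon> / sqrt \<delta>) \<kappa> \<psi>"
proof -
  have "1 / (\<epsilon> / sqrt \<delta>)^2 = \<delta> / \<epsilon>^2" using assms(4,5) by (simp add: power_divide)
  then show ?thesis
    unfolding G_def F_eq[OF assms(3)] Let_def zset_const_one Diff_empty
      wderiv_on_unit_interval[OF assms(1,2)] set_integral_wderiv01_const_sq
    by (simp add: algebra_simps)
qed

text \<open>Elements of J_class, and moduli of admissible pairs, are only controlled on the unit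
  interval, while the admissible class and the set integrals below require Borel measurability on
  the whole line; extending by zero repairs this.\<close>

definition zero_ext01 :: "(real \<Rightarrow> real) \<Rightarrow> real \<Rightarrow> real" where
  "zero_ext01 \<psi> x = (if x \<in> {0..1} then \<psi> x else 0)"

lemma zero_ext01_eq [simp]: "x \<in> {0..1} \<Longrightarrow> zero_ext01 \<psi> x = \<psi> x"
  by (simp add: zero_ext01_def)

lemma zero_ext01_measurable:
  assumes "continuous_on {0..1} \<psi>"
  shows "zero_ext01 \<psi> \<in> borel_measurable lborel"
proof -
  have "zero_ext01 \<psi> = (\<lambda>x. indicator {0..1} x *\<^sub>R \<psi> x)"
    by (rule ext) (simp add: zero_ext01_def indicator_def)
  then show ?thesis using borel_measurable_continuous_on_indicator[OF _ assms] by simp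
qed

lemma zero_ext01_H1:
  assumes h: "H1_01 \<psi>"
  shows "zero_ext01 \<psi> \<in> borel_measurable lborel"
    "set_integrable lborel {0..1} (\<lambda>x. (zero_ext01 \<psi> x)^2)"
    "H1_01 (zero_ext01 \<psi>)" "F \<beta> \<kappa> (zero_ext01 \<psi>) = F \<beta> \<kappa> \<psi>"
proof -
  have c: "continuous_on {0..1} \<psi>" by (rule is_wderiv01_continuous_on[OF is_wderiv01_wderiv01[OF h]])
  show "zero_ext01 \<psi> \<in> borel_measurable lborel" by (rule zero_ext01_measurable[OF c])
  have "continuous_on {0..1} (\<lambda>x. (zero_ext01 \<psi> x)^2)"
    by (rule continuous_on_eq[of _ "\<lambda>x. (\<psi> x)^2"]) (simp_all add: continuous_intros c)
  then show "set_integrable lborel {0..1} (\<lambda>x. (zero_ext01 \<psi> x)^2)"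
    by (rule borel_integrable_atLeastAtMost')
  have eq: "wderiv01 (zero_ext01 \<psi>) = wderiv01 \<psi>" "H1_01 (zero_ext01 \<psi>) = H1_01 \<psi>"
    by (rule wderiv01_cong, simp)+
  show "H1_01 (zero_ext01 \<psi>)" using eq(2) h by simp
  have "(LINT x:{0..1}|lborel. (wderiv01 \<psi> x)^2 + (sin (zero_ext01 \<psi> x))^2 / \<beta>^2)
      = (LINT x:{0..1}|lborel. (wderiv01 \<psi> x)^2 + (sin (\<psi> x))^2 / \<beta>^2)"
    by (rule set_lebesgue_integral_cong) simp_all
  then show "F \<beta> \<kappa> (zero_ext01 \<psi>) = F \<beta> \<kappa> \<psi>" unfolding F_def eq(1) by simp
qed

lemma admissible_const_one:
  assumes "\<psi> \<in> borel_measurable lborel" "set_integrable lborel {0..1} (\<lambda>x. (\<psi> x)^2)"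
    "H1_01 \<psi>" "\<psi> 0 = 0"
  shows "admissible (\<lambda>_. 1) \<psi>"
proof -
  have "is_wderiv_on {0..1} \<psi> (wderiv01 \<psi>)"
    by (rule is_wderiv_on_if_is_wderiv01[OF is_wderiv01_wderiv01[OF assms(3)] assms(1,2)])
  then show ?thesis
    unfolding admissible_def zset_const_one Diff_empty
    using assms(4) H1_01I[OF is_wderiv01_const] by (auto simp: set_integral_const_unit_interval)
qed

lemma minimizer_le_INF_F:
  assumes "\<epsilon> > 0" "\<delta> > 0"
    and minimal: "\<forall>w \<psi>. admissible w \<psi> \<longrightarrow> G \<epsilon> \<delta> \<kappa> v \<phi> \<le> G \<epsilon> \<delta> \<kappa> w \<psi>"
  shows "G \<epsilon> \<delta> \<kappa> v \<phi> \<le> (INF \<psi>\<in>J_class. F (\<epsilon> / sqrt \<delta>) \<kappa> \<psi>)"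
proof (rule cINF_greatest[OF J_class_nonempty])
  fix \<psi> assume "\<psi> \<in> J_class"
  then have h: "H1_01 \<psi>" and "\<psi> 0 = 0" unfolding J_class_def by auto
  note ext = zero_ext01_H1[OF h]
  have "admissible (\<lambda>_. 1) (zero_ext01 \<psi>)"
    by (rule admissible_const_one[OF ext(1-3)]) (simp add: \<open>\<psi> 0 = 0\<close>)
  then have "G \<epsilon> \<delta> \<kappa> v \<phi> \<le> G \<epsilon> \<delta> \<kappa> (\<lambda>_. 1) (zero_ext01 \<psi>)" using minimal by blast
  also have "\<dots> = F (\<epsilon> / sqrt \<delta>) \<kappa> \<psi>"
    using G_const_one_eq_F[OF ext(1-3) assms(1,2)] ext(4) by simp
  finally show "G \<epsilon> \<delta> \<kappa> v \<phi> \<le> F (\<epsilon> / sqrt \<delta>) \<kappa> \<psi>" .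
qed

section \<open>Lower bounds for G\<close>

definition GL_energy :: "real \<Rightarrow> (real \<Rightarrow> real) \<Rightarrow> real" where
  "GL_energy \<epsilon> v = 1/2 * (LINT x:{0..1}|lborel. (wderiv01 v x)^2)
     + 1/(4*\<epsilon>^2) * (LINT x:{0..1}|lborel. (1 - (v x)^2)^2)"

lemma GL_energy_nonneg: "0 \<le> GL_energy \<epsilon> v"
  unfolding GL_energy_def by (intro add_nonneg_nonneg mult_nonneg_nonneg set_integral_nonneg) simp_all

lemma zero_ext01_admissible:
  assumes "admissible v \<phi>"
  shows "admissible (zero_ext01 v) \<phi>" "G \<epsilon> \<delta> \<kappa> (zero_ext01 v) \<phi> = G \<epsilon> \<delta> \<kappa> v \<phi>"
    "GL_energy \<epsilon> (zero_ext01 v) = GL_energy \<epsilon> v" "zero_ext01 v \<in> borel_measurable lborel"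
proof -
  let ?v = "zero_ext01 v" and ?U = "{0..1} - zset v"
  have z: "zset ?v = zset v" unfolding zset_def by auto
  have d: "wderiv01 ?v = wderiv01 v" "H1_01 ?v = H1_01 v"
    by (rule wderiv01_cong, simp)+
  have U: "?U \<subseteq> {0..1}" by auto
  have "(LINT x:{0..1}|lborel. (?v x)^2) = (LINT x:{0..1}|lborel. (v x)^2)"
    by (rule set_integral_cong_unit_interval) simp_all
  then show "admissible ?v \<phi>" using assms unfolding admissible_def z d by simp
  have "(LINT x:{0..1}|lborel. (1 - (?v x)^2)^2) = (LINT x:{0..1}|lborel. (1 - (v x)^2)^2)"
    by (rule set_integral_cong_unit_interval) simp_all
  then show "GL_energy \<epsilon> ?v = GL_energy \<epsilon> v" unfolding GL_energy_def d by simp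
  show "G \<epsilon> \<delta> \<kappa> ?v \<phi> = G \<epsilon> \<delta> \<kappa> v \<phi>"
    unfolding G_def Let_def z d
    using set_integral_cong_unit_interval[OF order_refl, of "\<lambda>x. (1 - (?v x)^2)^2" "\<lambda>x. (1 - (v x)^2)^2"]
      set_integral_cong_unit_interval[OF U, of "\<lambda>x. (?v x)^2 * (wderiv_on ?U \<phi> x)^2" "\<lambda>x. (v x)^2 * (wderiv_on ?U \<phi> x)^2"]
      set_integral_cong_unit_interval[OF U, of "\<lambda>x. (?v x)^4 * (sin (\<phi> x))^2" "\<lambda>x. (v x)^4 * (sin (\<phi> x))^2"]
      set_integral_cong_unit_interval[OF U, of "\<lambda>x. (?v x)^2 * wderiv_on ?U \<phi> x" "\<lambda>x. (v x)^2 * wderiv_on ?U \<phi> x"]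
    by simp
  show "?v \<in> borel_measurable lborel"
    using assms unfolding admissible_def H1_01_def
    by (metis zero_ext01_measurable is_wderiv01_continuous_on)
qed

lemma admissible_set_integrable:
  assumes adm: "admissible v \<phi>" and vm [measurable]: "v \<in> borel_measurable lborel"
  defines "U \<equiv> {0..1} - zset v" and "p \<equiv> wderiv_on ({0..1} - zset v) \<phi>"
  shows "set_integrable lborel U (\<lambda>x. (v x)^2 * (p x)^2)" "set_integrable lborel U (\<lambda>x. (v x)^2 * p x)"
    "set_integrable lborel U (\<lambda>x. (v x)^2)" "set_integrable lborel U (\<lambda>x. (v x)^4 * (sin (\<phi> x))^2)"
    "(LINT x:U|lborel. (v x)^2) = 1"
proof -
  have h: "H1_01 v" and ex: "\<exists>g. is_wderiv_on U \<phi> g"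
    and norm: "(LINT x:{0..1}|lborel. (v x)^2) = 1"
    using adm unfolding admissible_def U_def by auto
  have c: "continuous_on {0..1} v" by (rule is_wderiv01_continuous_on[OF is_wderiv01_wderiv01[OF h]])
  have "closed (zset v)"
    unfolding zset_def by (rule continuous_closed_preimage_constant[OF c]) simp
  then have U [measurable]: "U \<in> sets lborel" unfolding U_def by (auto intro: borel_closed)
  have U01: "U \<subseteq> {0..1}" unfolding U_def by auto
  have "is_wderiv_on U \<phi> p" unfolding p_def U_def[symmetric] by (rule is_wderiv_on_wderiv_on[OF ex])
  then have [measurable]: "p \<in> borel_measurable lborel" "\<phi> \<in> borel_measurable lborel"
    and p2: "set_integrable lborel U (\<lambda>x. (p x)^2)"
    unfolding is_wderiv_on_def by blast+
  obtain K where K: "\<And>x. x \<in> {0..1} \<Longrightarrow> \<bar>v x\<bar> \<le> K"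
    using continuous_on_unit_interval_bounded[OF c] by blast
  have v2K: "\<bar>(v x)^2\<bar> \<le> K^2" if "x \<in> U" for x
    using power_mono[OF K[of x], of 2] U01 that by auto
  have one: "set_integrable lborel U (\<lambda>_. 1::real)"
    by (rule set_integrable_subset[OF _ U U01]) (simp add: borel_integrable_atLeastAtMost')
  note bounded_mult = set_integrable_bounded_mult[where g = "\<lambda>x. (v x)^2" and B = "K^2", OF _ _ v2K]
  show "set_integrable lborel U (\<lambda>x. (v x)^2 * (p x)^2)" "set_integrable lborel U (\<lambda>x. (v x)^2 * p x)"
    "set_integrable lborel U (\<lambda>x. (v x)^2)"
    using bounded_mult[OF p2] bounded_mult[OF set_integrable_if_sq[OF one p2]] bounded_mult[OF one]
    by simp_all
  have "\<bar>v x\<bar>^4 * (sin (\<phi> x))^2 \<le> K^4 * 1" if "x \<in> U" for x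
    using power_mono[OF K[of x], of 4] U01 that by (intro mult_mono) (auto simp: abs_square_le_1)
  then show "set_integrable lborel U (\<lambda>x. (v x)^4 * (sin (\<phi> x))^2)"
    using set_integrable_bounded_mult[OF one, where g = "\<lambda>x. (v x)^4 * (sin (\<phi> x))^2" and B = "K^4"]
    by (simp add: abs_mult power_abs)
  have "(LINT x:U|lborel. (v x)^2) = (LINT x:{0..1}|lborel. (v x)^2)"
    unfolding set_lebesgue_integral_def
    by (rule Bochner_Integration.integral_cong) (auto simp: U_def zset_def indicator_def)
  then show "(LINT x:U|lborel. (v x)^2) = 1" using norm by simp
qed

lemma G_eq:
  assumes adm: "admissible v \<phi>" and vm: "v \<in> borel_measurable lborel"
  defines "U \<equiv> {0..1} - zset v"
  shows "G \<epsilon> \<delta> \<kappa> v \<phi> = GL_energy \<epsilon> v - \<kappa>^2/2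
     + 1/8 * (LINT x:U|lborel. (v x)^2 * (wderiv_on U \<phi> x - 2 * \<kappa>)^2)
     + \<delta>/(8*\<epsilon>^2) * (LINT x:U|lborel. (v x)^4 * (sin (\<phi> x))^2)"
    and "set_integrable lborel U (\<lambda>x. (v x)^2 * (wderiv_on U \<phi> x - 2 * \<kappa>)^2)"
    and "set_integrable lborel U (\<lambda>x. (v x)^4 * (sin (\<phi> x))^2)"
proof -
  note I = admissible_set_integrable[OF adm vm, folded U_def]
  have "(LINT x:U|lborel. (v x)^2 * (wderiv_on U \<phi> x - 2 * \<kappa>)^2)
      = (LINT x:U|lborel. (v x)^2 * (wderiv_on U \<phi> x)^2)
        - 4 * \<kappa> * (LINT x:U|lborel. (v x)^2 * wderiv_on U \<phi> x) + 4 * \<kappa>^2"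
    using set_integral_weighted_square(2)[OF I(1-3), of "2 * \<kappa>"] I(5) by (simp add: power_mult_distrib)
  then show "G \<epsilon> \<delta> \<kappa> v \<phi> = GL_energy \<epsilon> v - \<kappa>^2/2
     + 1/8 * (LINT x:U|lborel. (v x)^2 * (wderiv_on U \<phi> x - 2 * \<kappa>)^2)
     + \<delta>/(8*\<epsilon>^2) * (LINT x:U|lborel. (v x)^4 * (sin (\<phi> x))^2)"
    unfolding G_def GL_energy_def Let_def U_def[symmetric] by (simp add: field_simps)
  show "set_integrable lborel U (\<lambda>x. (v x)^2 * (wderiv_on U \<phi> x - 2 * \<kappa>)^2)"
    by (rule set_integral_weighted_square(1)[OF I(1-3)])
  show "set_integrable lborel U (\<lambda>x. (v x)^4 * (sin (\<phi> x))^2)" by (rule I(4))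
qed

lemma G_ge_GL_energy:
  assumes "admissible v \<phi>" "0 \<le> \<delta>"
  shows "GL_energy \<epsilon> v - \<kappa>^2/2 \<le> G \<epsilon> \<delta> \<kappa> v \<phi>"
proof -
  note ext = zero_ext01_admissible[OF assms(1)]
  have "0 \<le> 1/8 * (LINT x:{0..1} - zset (zero_ext01 v)|lborel.
      (zero_ext01 v x)^2 * (wderiv_on ({0..1} - zset (zero_ext01 v)) \<phi> x - 2 * \<kappa>)^2)"
    "0 \<le> \<delta>/(8*\<epsilon>^2) * (LINT x:{0..1} - zset (zero_ext01 v)|lborel.
      (zero_ext01 v x)^4 * (sin (\<phi> x))^2)"
    using assms(2) by (intro mult_nonneg_nonneg set_integral_nonneg; simp)+
  then have "GL_energy \<epsilon> (zero_ext01 v) - \<kappa>^2/2 \<le> G \<epsilon> \<delta> \<kappa> (zero_ext01 v) \<phi>"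
    unfolding G_eq(1)[OF ext(1,4)] by linarith
  then show ?thesis using ext(2,3) by simp
qed

lemma admissible_nonvanishing:
  assumes "admissible v \<phi>" "\<And>x. x \<in> {0..1} \<Longrightarrow> v x \<noteq> 0"
  shows "\<phi> \<in> J_class" "\<phi> \<in> borel_measurable lborel"
    "set_integrable lborel {0..1} (\<lambda>x. (\<phi> x)^2)"
proof -
  have "zset v = {}" unfolding zset_def using assms(2) by auto
  then obtain g where g: "is_wderiv_on {0..1} \<phi> g" using assms(1) unfolding admissible_def by auto
  then show "\<phi> \<in> borel_measurable lborel" "set_integrable lborel {0..1} (\<lambda>x. (\<phi> x)^2)"
    unfolding is_wderiv_on_def by blast+
  show "\<phi> \<in> J_class"
    using H1_01I[OF is_wderiv01_if_is_wderiv_on[OF g]] assms(1)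
    unfolding J_class_def admissible_def by simp
qed

lemma pow4_scaled_le:
  fixes l w q a s :: real
  assumes "0 < l" "l \<le> 1" "l \<le> w" "0 \<le> a" "0 \<le> s"
  shows "l^4 * (q^2 / 8 + a * s) \<le> w^2 * q^2 / 8 + a * (w^4 * s)"
proof -
  have "l^4 \<le> l^2" using assms(1,2) by (intro power_decreasing) simp_all
  also have "l^2 \<le> w^2" using assms(1,3) by (intro power_mono) simp_all
  finally have "l^4 * (q^2 / 8) \<le> w^2 * (q^2 / 8)" by (intro mult_right_mono) simp_all
  moreover have "l^4 * (a * s) \<le> w^4 * (a * s)" using assms by (intro mult_right_mono power_mono) simp_all
  ultimately show ?thesis by (simp add: algebra_simps)
qed

lemma G_ge_GL_energy_F:
  assumes adm: "admissible v \<phi>" and "0 < \<epsilon>" "0 < \<delta>" "0 < l" "l \<le> 1"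
    and lower: "\<And>x. x \<in> {0..1} \<Longrightarrow> l \<le> v x"
  shows "GL_energy \<epsilon> v + l^4 * (F (\<epsilon> / sqrt \<delta>) \<kappa> \<phi> + \<kappa>^2/2) - \<kappa>^2/2 \<le> G \<epsilon> \<delta> \<kappa> v \<phi>"
proof -
  note ext = zero_ext01_admissible[OF adm]
  let ?v = "zero_ext01 v" and ?a = "\<delta> / (8 * \<epsilon>^2)"
  have nonzero: "\<And>x. x \<in> {0..1} \<Longrightarrow> ?v x \<noteq> 0" using lower \<open>0 < l\<close> by force
  then have "zset ?v = {}" unfolding zset_def by auto
  note phase = admissible_nonvanishing[OF ext(1) nonzero]
  define p where "p = wderiv01 \<phi>"
  have p: "wderiv_on ({0..1} - zset ?v) \<phi> = p"
    unfolding \<open>zset ?v = {}\<close> Diff_empty p_def by (rule wderiv_on_unit_interval[OF phase(2,3)])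
  have U: "{0..1} - zset ?v = {0..1}" using \<open>zset ?v = {}\<close> by simp
  have G: "G \<epsilon> \<delta> \<kappa> ?v \<phi> = GL_energy \<epsilon> ?v - \<kappa>^2/2
      + 1/8 * (LINT x:{0..1}|lborel. (?v x)^2 * (p x - 2 * \<kappa>)^2)
      + ?a * (LINT x:{0..1}|lborel. (?v x)^4 * (sin (\<phi> x))^2)"
    and G1: "set_integrable lborel {0..1} (\<lambda>x. (?v x)^2 * (p x - 2 * \<kappa>)^2)"
    and G2: "set_integrable lborel {0..1} (\<lambda>x. (?v x)^4 * (sin (\<phi> x))^2)"
    using G_eq(1)[OF ext(1,4), of \<epsilon> \<delta> \<kappa>] G_eq(2)[OF ext(1,4), of \<kappa>] G_eq(3)[OF ext(1,4)]
    unfolding U p[unfolded U] by simp_all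
  have "s / (8 * (\<epsilon> / sqrt \<delta>)^2) = ?a * s" for s
    using assms(2,3) by (simp add: power_divide)
  then have F: "F (\<epsilon> / sqrt \<delta>) \<kappa> \<phi> + \<kappa>^2/2
      = (LINT x:{0..1}|lborel. (p x - 2 * \<kappa>)^2 / 8 + ?a * (sin (\<phi> x))^2)"
    and F1: "set_integrable lborel {0..1} (\<lambda>x. (p x - 2 * \<kappa>)^2 / 8 + ?a * (sin (\<phi> x))^2)"
    using F_plus_eq[where \<beta> = "\<epsilon> / sqrt \<delta>" and \<kappa> = \<kappa>] phase(1) unfolding J_class_def p_def
    by simp_all
  have "l^4 * (LINT x:{0..1}|lborel. (p x - 2 * \<kappa>)^2 / 8 + ?a * (sin (\<phi> x))^2)
      = (LINT x:{0..1}|lborel. l^4 * ((p x - 2 * \<kappa>)^2 / 8 + ?a * (sin (\<phi> x))^2))"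
    by simp
  also have "\<dots> \<le> (LINT x:{0..1}|lborel.
      (?v x)^2 * (p x - 2 * \<kappa>)^2 / 8 + ?a * ((?v x)^4 * (sin (\<phi> x))^2))"
  proof (rule set_integral_mono)
    show "set_integrable lborel {0..1}
        (\<lambda>x. (?v x)^2 * (p x - 2 * \<kappa>)^2 / 8 + ?a * ((?v x)^4 * (sin (\<phi> x))^2))"
      using G1 G2 by simp
    fix x :: real assume "x \<in> {0..1}"
    then show "l^4 * ((p x - 2 * \<kappa>)^2 / 8 + ?a * (sin (\<phi> x))^2)
        \<le> (?v x)^2 * (p x - 2 * \<kappa>)^2 / 8 + ?a * ((?v x)^4 * (sin (\<phi> x))^2)"
      using lower \<open>0 < l\<close> \<open>l \<le> 1\<close> \<open>0 < \<delta>\<close> by (intro pow4_scaled_le) simp_all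
  qed (use F1 in simp)
  also have "\<dots> = G \<epsilon> \<delta> \<kappa> ?v \<phi> - GL_energy \<epsilon> ?v + \<kappa>^2/2"
    unfolding G using set_integral_add(2)[OF set_integrable_mult_right[OF G1, of "1/8"]
        set_integrable_mult_right[OF G2, of ?a]] by simp
  finally show ?thesis using F ext(2,3) by simp
qed

section \<open>Uniform closeness of the modulus to 1\<close>

lemma is_wderiv01_oscillation:
  assumes w: "is_wderiv01 v g" and xy: "x \<in> {0..1}" "y \<in> {0..1}" and "s > 0"
  shows "\<bar>v y - v x\<bar> \<le> 1/(2 * s) * (LINT t:{0..1}|lborel. (g t)^2) + s/2 * \<bar>y - x\<bar>"
proof -
  have *: "\<bar>v b - v a\<bar> \<le> 1/(2 * s) * (LINT t:{0..1}|lborel. (g t)^2) + s/2 * (b - a)"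
    if ab: "0 \<le> a" "a \<le> b" "b \<le> 1" for a b
  proof -
    have ig: "set_integrable lborel {a..b} g" by (rule is_wderiv01_interval(1)[OF w ab])
    have ig2: "set_integrable lborel {a..b} (\<lambda>t. (g t)^2)"
      by (rule set_integrable_subset[OF is_wderiv01D(3)[OF w]]) (use ab in auto)
    have ic: "set_integrable lborel {a..b} (\<lambda>t. s/2)" by (simp add: borel_integrable_atLeastAtMost')
    have "\<bar>v b - v a\<bar> = \<bar>LINT t:{a..b}|lborel. g t\<bar>" using is_wderiv01_interval(2)[OF w ab] by simp
    also have "\<dots> \<le> (LINT t:{a..b}|lborel. \<bar>g t\<bar>)"
      using set_integral_norm_bound[OF ig] by simp
    also have "\<dots> \<le> (LINT t:{a..b}|lborel. 1/(2 * s) * (g t)^2 + s/2)"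
    proof (rule set_integral_mono)
      fix t
      have "0 \<le> (\<bar>g t\<bar> - s)^2" by simp
      then show "\<bar>g t\<bar> \<le> 1/(2 * s) * (g t)^2 + s/2"
        using \<open>s > 0\<close> by (simp add: field_simps power2_eq_square)
    qed (use set_integrable_norm[OF ig] set_integral_add(1)[OF set_integrable_mult_right[OF ig2] ic,
      of "1/(2 * s)"] in simp_all)
    also have "\<dots> = 1/(2 * s) * (LINT t:{a..b}|lborel. (g t)^2) + s/2 * (b - a)"
      using ab by (simp only: set_integral_add(2)[OF set_integrable_mult_right[OF ig2] ic]
          set_integral_mult_right) (simp add: set_lebesgue_integral_def)
    also have "\<dots> \<le> 1/(2 * s) * (LINT t:{0..1}|lborel. (g t)^2) + s/2 * (b - a)"
      using set_integral_mono_set[OF is_wderiv01D(3)[OF w], of "{a..b}"] ab \<open>s > 0\<close>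
      by (intro add_mono mult_left_mono) simp_all
    finally show ?thesis .
  qed
  show ?thesis
    using *[of x y] *[of y x] xy by (cases "x \<le> y") (auto simp: abs_minus_commute)
qed

lemma sq_diff_one_le_sq_one_diff_sq:
  fixes y :: real
  assumes "0 \<le> y"
  shows "(y - 1)^2 \<le> (1 - y^2)^2"
proof -
  have "(1 - y^2)^2 = (y - 1)^2 * (y + 1)^2" by (simp add: power2_eq_square algebra_simps)
  moreover have "1 * 1 \<le> (y + 1) * (y + 1)" using assms by (intro mult_mono) simp_all
  ultimately show ?thesis by (simp add: mult_le_cancel_left1 power2_eq_square)
qed

lemma sq_le_of_min_bound:
  fixes d e \<epsilon> :: real
  assumes "0 < e" "0 < \<epsilon>" "\<epsilon> \<le> 1" and bound: "d^2 / 4 * min (1/2) (d^2 / (8 * e)) \<le> 4 * \<epsilon>^2 * e"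
  shows "d^2 \<le> 32 * \<epsilon> * e"
proof (cases "1/2 \<le> d^2 / (8 * e)")
  case True
  then have "d^2 \<le> 32 * \<epsilon>^2 * e" using bound by simp
  also have "\<dots> \<le> 32 * \<epsilon> * e" using assms(1-3) by (simp add: power2_eq_square mult_right_le_one_le)
  finally show ?thesis .
next
  case False
  then have "(d^2)^2 \<le> 128 * \<epsilon>^2 * e^2"
    using bound assms(1) by (simp add: field_simps power2_eq_square)
  also have "\<dots> \<le> (32 * \<epsilon> * e)^2" by (simp add: power_mult_distrib)
  finally show ?thesis by (rule power2_le_imp_le) (use assms(1,2) in simp)
qed

lemma interval_around:
  fixes x l :: real
  assumes "x \<in> {0..1}" "0 < l" "l \<le> 1/2"
  obtains a b where "0 \<le> a" "a \<le> b" "b \<le> 1" "b - a = l" "x \<in> {a..b}"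
proof (cases "x + l \<le> 1")
  case True then show ?thesis using that[of x "x + l"] assms by auto
next
  case False then show ?thesis using that[of "x - l" x] assms by auto
qed

lemma is_wderiv01_near:
  assumes w: "is_wderiv01 v g" and "x \<in> {0..1}" "y \<in> {0..1}" and "0 < e" "0 < d"
    and D: "(LINT t:{0..1}|lborel. (g t)^2) \<le> 2 * e" and xy: "\<bar>y - x\<bar> \<le> d^2 / (8 * e)"
  shows "\<bar>v y - v x\<bar> \<le> d/2"
proof -
  define s where "s = 4 * e / d"
  have s: "s > 0" unfolding s_def using \<open>0 < d\<close> \<open>0 < e\<close> by simp
  have "\<bar>v y - v x\<bar> \<le> 1/(2 * s) * (LINT t:{0..1}|lborel. (g t)^2) + s/2 * \<bar>y - x\<bar>"
    by (rule is_wderiv01_oscillation[OF w assms(2,3) s])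
  also have "\<dots> \<le> 1/(2 * s) * (2 * e) + s/2 * (d^2 / (8 * e))"
    using D xy s by (intro add_mono mult_left_mono) auto
  also have "\<dots> = d/2"
    unfolding s_def using \<open>0 < d\<close> \<open>0 < e\<close> by (simp add: field_simps power2_eq_square)
  finally show ?thesis .
qed

lemma sq_dist_one_le_of_near:
  fixes a b :: real
  assumes "0 \<le> b" "\<bar>b - a\<bar> \<le> \<bar>a - 1\<bar>/2"
  shows "(a - 1)^2 / 4 \<le> (1 - b^2)^2"
proof -
  have "\<bar>a - 1\<bar> \<le> \<bar>b - a\<bar> + \<bar>b - 1\<bar>"
    using abs_triangle_ineq[of "a - b" "b - 1"] by (simp add: abs_minus_commute)
  moreover have "\<And>A B C :: real. A \<le> B/2 \<Longrightarrow> B \<le> A + C \<Longrightarrow> B/2 \<le> C" by linarith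
  ultimately have "\<bar>a - 1\<bar> / 2 \<le> \<bar>b - 1\<bar>" using assms(2) by blast
  then have "(\<bar>a - 1\<bar> / 2)^2 \<le> \<bar>b - 1\<bar>^2" by (rule power_mono) simp
  also have "\<dots> \<le> (1 - b^2)^2" using sq_diff_one_le_sq_one_diff_sq[OF assms(1)] by simp
  finally show ?thesis by (simp add: power_divide)
qed

text \<open>If |v x - 1| = d, the bound on the Dirichlet energy keeps |v - 1| \<ge> d/2 on an interval of
  length min (1/2) (d^2 / (8 e)) around x, and there the potential is at least d^2/4.\<close>

lemma dist_one_sq_le_of_bounds:
  assumes w: "is_wderiv01 v g" and nonneg: "\<And>y. y \<in> {0..1} \<Longrightarrow> 0 \<le> v y"
    and "0 < \<epsilon>" "\<epsilon> \<le> 1" "0 < e"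
    and D: "(LINT t:{0..1}|lborel. (g t)^2) \<le> 2 * e"
    and Q: "(LINT t:{0..1}|lborel. (1 - (v t)^2)^2) \<le> 4 * \<epsilon>^2 * e"
    and x: "x \<in> {0..1}"
  shows "(v x - 1)^2 \<le> 32 * \<epsilon> * e"
proof (cases "v x = 1")
  case False
  define d where "d = \<bar>v x - 1\<bar>"
  define l where "l = min (1/2) (d^2 / (8 * e))"
  have "d > 0" unfolding d_def using False by simp
  then have "0 < l" "l \<le> 1/2" unfolding l_def using \<open>0 < e\<close> by simp_all
  then obtain a b where ab: "0 \<le> a" "a \<le> b" "b \<le> 1" "b - a = l" "x \<in> {a..b}"
    using interval_around[OF x] by blast
  have low: "d^2/4 \<le> (1 - (v y)^2)^2" if y: "y \<in> {a..b}" for y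
  proof -
    have y01: "y \<in> {0..1}" and "\<bar>y - x\<bar> \<le> d^2 / (8 * e)" using y ab unfolding l_def by auto
    then have "\<bar>v y - v x\<bar> \<le> d/2" by (rule is_wderiv01_near[OF w x _ \<open>0 < e\<close> \<open>d > 0\<close> D])
    then show ?thesis
      using sq_dist_one_le_of_near[OF nonneg[OF y01], of "v x"] unfolding d_def by simp
  qed
  have cont: "continuous_on {0..1} (\<lambda>y. (1 - (v y)^2)^2)"
    by (intro continuous_intros is_wderiv01_continuous_on[OF w])
  have "d^2/4 * l = (LINT y:{a..b}|lborel. d^2/4)" using ab by (simp add: set_lebesgue_integral_def)
  also have "\<dots> \<le> (LINT y:{a..b}|lborel. (1 - (v y)^2)^2)"
    using low set_integrable_subset[OF borel_integrable_atLeastAtMost'[OF cont], of "{a..b}"] ab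
    by (intro set_integral_mono) (auto simp: borel_integrable_atLeastAtMost')
  also have "\<dots> \<le> (LINT y:{0..1}|lborel. (1 - (v y)^2)^2)"
    using ab by (intro set_integral_mono_set[OF borel_integrable_atLeastAtMost'[OF cont]]) auto
  finally have "d^2/4 * l \<le> 4 * \<epsilon>^2 * e" using Q by linarith
  then have "d^2 \<le> 32 * \<epsilon> * e" unfolding l_def by (rule sq_le_of_min_bound[OF \<open>0 < e\<close> \<open>0 < \<epsilon>\<close> \<open>\<epsilon> \<le> 1\<close>])
  then show ?thesis unfolding d_def by simp
qed (use \<open>0 < \<epsilon>\<close> \<open>0 < e\<close> in simp)

lemma dist_one_sq_le_GL_energy:
  assumes "H1_01 v" and nonneg: "\<And>y. y \<in> {0..1} \<Longrightarrow> 0 \<le> v y"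
    and "0 < \<epsilon>" "\<epsilon> \<le> 1" "x \<in> {0..1}"
  shows "(v x - 1)^2 \<le> 32 * \<epsilon> * GL_energy \<epsilon> v"
proof (rule field_le_epsilon)
  fix t :: real assume "t > 0"
  define e where "e = GL_energy \<epsilon> v + t / (32 * \<epsilon>)"
  have e: "0 < e" unfolding e_def using \<open>t > 0\<close> \<open>0 < \<epsilon>\<close> GL_energy_nonneg[of \<epsilon> v]
    by (simp add: add_nonneg_pos)
  have P: "0 \<le> (LINT x:{0..1}|lborel. (wderiv01 v x)^2)" "0 \<le> (LINT x:{0..1}|lborel. (1 - (v x)^2)^2)"
    by (simp_all add: set_integral_nonneg)
  have "(v x - 1)^2 \<le> 32 * \<epsilon> * e"
  proof (rule dist_one_sq_le_of_bounds[OF is_wderiv01_wderiv01[OF assms(1)] nonneg assms(3,4) e _ _ assms(5)])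
    show "(LINT x:{0..1}|lborel. (wderiv01 v x)^2) \<le> 2 * e"
      using P \<open>t > 0\<close> \<open>0 < \<epsilon>\<close> unfolding e_def GL_energy_def by simp
    show "(LINT x:{0..1}|lborel. (1 - (v x)^2)^2) \<le> 4 * \<epsilon>^2 * e"
      using P \<open>t > 0\<close> \<open>0 < \<epsilon>\<close> unfolding e_def GL_energy_def by (simp add: field_simps)
  qed
  also have "\<dots> = 32 * \<epsilon> * GL_energy \<epsilon> v + t" unfolding e_def using \<open>0 < \<epsilon>\<close> by (simp add: field_simps)
  finally show "(v x - 1)^2 \<le> 32 * \<epsilon> * GL_energy \<epsilon> v + t" .
qed

section \<open>Juxtaposing profiles on consecutive slots\<close>

definition clip :: "real \<Rightarrow> real \<Rightarrow> real" where
  "clip \<tau> y = max 0 (min \<tau> y)"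

definition in_slot :: "real \<Rightarrow> nat \<Rightarrow> real \<Rightarrow> bool" where
  "in_slot \<tau> k x \<longleftrightarrow> real k * \<tau> < x \<and> x < real k * \<tau> + \<tau>"

text \<open>slot_sum \<tau> n f places n copies of the profile f on the slots [k \<tau>, (k + 1) \<tau>]: the k-th
  copy runs through f on its slot and is frozen at f 0 before and at f \<tau> after it.\<close>

definition slot_sum :: "real \<Rightarrow> nat \<Rightarrow> (real \<Rightarrow> real) \<Rightarrow> real \<Rightarrow> real" where
  "slot_sum \<tau> n f x = (\<Sum>k<n. f (clip \<tau> (x - real k * \<tau>)))"

definition slot_deriv :: "real \<Rightarrow> nat \<Rightarrow> (real \<Rightarrow> real) \<Rightarrow> real \<Rightarrow> real" where
  "slot_deriv \<tau> n f' x = (\<Sum>k<n. if in_slot \<tau> k x then f' (x - real k * \<tau>) else 0)"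

lemma clip_nonpos: "y \<le> 0 \<Longrightarrow> 0 \<le> \<tau> \<Longrightarrow> clip \<tau> y = 0"
  and clip_mid: "0 \<le> y \<Longrightarrow> y \<le> \<tau> \<Longrightarrow> clip \<tau> y = y"
  and clip_ge: "\<tau> \<le> y \<Longrightarrow> 0 \<le> \<tau> \<Longrightarrow> clip \<tau> y = \<tau>"
  unfolding clip_def by simp_all

lemma clip_comp_has_derivative:
  fixes f f' :: "real \<Rightarrow> real"
  assumes f: "\<And>y. (f has_real_derivative f' y) (at y)" and "\<tau> > 0"
    and "x - c \<noteq> 0" "x - c \<noteq> \<tau>"
  shows "((\<lambda>y. f (clip \<tau> (y - c))) has_real_derivative
    (if c < x \<and> x < c + \<tau> then f' (x - c) else 0)) (at x)"
proof -
  consider "x < c" | "c < x" "x < c + \<tau>" | "c + \<tau> < x" using assms(3,4) by fastforce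
  then show ?thesis
  proof cases
    case 1
    have "((\<lambda>y. f 0) has_real_derivative 0) (at x)" by (rule DERIV_const)
    then have "((\<lambda>y. f (clip \<tau> (y - c))) has_real_derivative 0) (at x)"
      by (rule has_field_derivative_transform_within_open[of _ _ _ "{..<c}"])
        (use 1 \<open>\<tau> > 0\<close> in \<open>simp_all add: clip_nonpos\<close>)
    then show ?thesis using 1 by simp
  next
    case 2
    have "((\<lambda>y. f (y - c)) has_real_derivative f' (x - c)) (at x)"
      using DERIV_chain2[OF f DERIV_diff[OF DERIV_ident DERIV_const]] by simp
    then have "((\<lambda>y. f (clip \<tau> (y - c))) has_real_derivative f' (x - c)) (at x)"
      by (rule has_field_derivative_transform_within_open[of _ _ _ "{c<..<c+\<tau>}"])
        (use 2 in \<open>simp_all add: clip_mid\<close>)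
    then show ?thesis using 2 by simp
  next
    case 3
    have "((\<lambda>y. f \<tau>) has_real_derivative 0) (at x)" by (rule DERIV_const)
    then have "((\<lambda>y. f (clip \<tau> (y - c))) has_real_derivative 0) (at x)"
      by (rule has_field_derivative_transform_within_open[of _ _ _ "{c+\<tau><..}"])
        (use 3 \<open>\<tau> > 0\<close> in \<open>simp_all add: clip_ge\<close>)
    then show ?thesis using 3 by simp
  qed
qed

lemma slot_sum_has_derivative:
  assumes f: "\<And>y. (f has_real_derivative f' y) (at y)" and "\<tau> > 0"
    and x: "x \<notin> (\<lambda>k. real k * \<tau>) ` {..n}"
  shows "(slot_sum \<tau> n f has_real_derivative slot_deriv \<tau> n f' x) (at x)"
  unfolding slot_sum_def[abs_def] slot_deriv_def in_slot_def
proof (rule DERIV_sum)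
  fix k assume "k \<in> {..<n}"
  then have "x - real k * \<tau> \<noteq> 0" "x - real k * \<tau> \<noteq> \<tau>"
    using x image_eqI[of "real k * \<tau>" "\<lambda>k. real k * \<tau>" k]
      image_eqI[of "real k * \<tau> + \<tau>" "\<lambda>k. real k * \<tau>" "Suc k"]
    by (auto simp: algebra_simps)
  then show "((\<lambda>y. f (clip \<tau> (y - real k * \<tau>))) has_real_derivative
      (if real k * \<tau> < x \<and> x < real k * \<tau> + \<tau> then f' (x - real k * \<tau>) else 0)) (at x)"
    by (rule clip_comp_has_derivative[OF f \<open>\<tau> > 0\<close>])
qed

lemma continuous_on_slot_sum:
  assumes "continuous_on UNIV f"
  shows "continuous_on S (slot_sum \<tau> n f)"
  unfolding slot_sum_def[abs_def] clip_def
  by (intro continuous_on_sum continuous_on_compose2[OF assms] continuous_intros) simp_all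

lemma slot_sum_has_integral:
  assumes f: "\<And>y. (f has_real_derivative f' y) (at y)" and "\<tau> > 0" "a \<le> b"
  shows "(slot_deriv \<tau> n f' has_integral slot_sum \<tau> n f b - slot_sum \<tau> n f a) {a..b}"
proof (rule fundamental_theorem_of_calculus_strong[of "(\<lambda>k. real k * \<tau>) ` {..n}"])
  show "continuous_on {a..b} (slot_sum \<tau> n f)"
    by (rule continuous_on_slot_sum)
      (use f in \<open>auto intro: continuous_at_imp_continuous_on DERIV_isCont\<close>)
  fix y assume "y \<in> {a..b} - (\<lambda>k. real k * \<tau>) ` {..n}"
  then show "(slot_sum \<tau> n f has_vector_derivative slot_deriv \<tau> n f' y) (at y)"
    using slot_sum_has_derivative[OF f \<open>\<tau> > 0\<close>]
    by (simp add: has_real_derivative_iff_has_vector_derivative[symmetric])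
qed (use \<open>a \<le> b\<close> in simp_all)

lemma in_slot_unique:
  assumes "\<tau> > 0" "in_slot \<tau> j x" "in_slot \<tau> k x"
  shows "j = k"
proof -
  have "real j * \<tau> < (real k + 1) * \<tau>" "real k * \<tau> < (real j + 1) * \<tau>"
    using assms(2,3) unfolding in_slot_def by (simp_all add: algebra_simps)
  then have "real j < real k + 1" "real k < real j + 1"
    using \<open>\<tau> > 0\<close> by (simp_all add: mult_less_cancel_right)
  then show ?thesis by linarith
qed

lemma sum_in_slot:
  assumes "\<tau> > 0" "j < n" "in_slot \<tau> j x"
  shows "(\<Sum>k<n. if in_slot \<tau> k x then h k else 0) = h j"
proof -
  have "(\<Sum>k<n. if in_slot \<tau> k x then h k else 0) = (\<Sum>k<n. if k = j then h j else 0)"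
    by (rule sum.cong) (use in_slot_unique[OF assms(1)] assms(3) in auto)
  then show ?thesis using assms(2) by simp
qed

lemma slot_deriv_cases:
  assumes "\<tau> > 0"
  obtains "slot_deriv \<tau> n f' x = 0" "\<forall>k<n. \<not> in_slot \<tau> k x"
  | j where "j < n" "in_slot \<tau> j x" "\<And>h :: nat \<Rightarrow> real. (\<Sum>k<n. if in_slot \<tau> k x then h k else 0) = h j"
    "slot_deriv \<tau> n f' x = f' (x - real j * \<tau>)"
proof (cases "\<exists>j<n. in_slot \<tau> j x")
  case True
  then obtain j where j: "j < n" "in_slot \<tau> j x" by blast
  have "(\<Sum>k<n. if in_slot \<tau> k x then h k else 0) = h j" for h :: "nat \<Rightarrow> real"
    by (rule sum_in_slot[OF assms j])
  moreover have "slot_deriv \<tau> n f' x = f' (x - real j * \<tau>)"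
    unfolding slot_deriv_def by (rule sum_in_slot[OF assms j])
  ultimately show ?thesis by (rule that(2)[OF j])
next
  case False
  then have "slot_deriv \<tau> n f' x = 0" unfolding slot_deriv_def by simp
  then show ?thesis using False by (intro that(1)) auto
qed

lemma slot_deriv_sq:
  assumes "\<tau> > 0"
  shows "(slot_deriv \<tau> n f' x)^2 = slot_deriv \<tau> n (\<lambda>y. (f' y)^2) x"
  by (cases rule: slot_deriv_cases[OF assms, of n f' x]) (auto simp: slot_deriv_def)

lemma abs_slot_deriv_le:
  assumes "\<tau> > 0" "0 \<le> B" "\<And>y. \<bar>f' y\<bar> \<le> B"
  shows "\<bar>slot_deriv \<tau> n f' x\<bar> \<le> B"
  by (cases rule: slot_deriv_cases[OF assms(1), of n f' x]) (use assms(2,3) in auto)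

lemma slot_deriv_measurable:
  assumes "continuous_on UNIV f'"
  shows "slot_deriv \<tau> n f' \<in> borel_measurable lborel"
proof -
  have [measurable]: "(\<lambda>x. f' (x - real k * \<tau>)) \<in> borel_measurable borel" for k
    by (intro borel_measurable_continuous_onI continuous_on_compose2[OF assms] continuous_intros) simp_all
  show ?thesis unfolding slot_deriv_def[abs_def] in_slot_def by measurable
qed

lemma slot_sum_0:
  assumes "\<tau> > 0"
  shows "slot_sum \<tau> n f 0 = real n * f 0"
  using clip_nonpos[of _ \<tau>] assms by (simp add: slot_sum_def)

lemma slot_sum_1:
  assumes "\<tau> > 0" "real n * \<tau> \<le> 1"
  shows "slot_sum \<tau> n f 1 = real n * f \<tau>"
proof -
  have "clip \<tau> (1 - real k * \<tau>) = \<tau>" if "k < n" for k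
  proof (rule clip_ge)
    have "real (Suc k) * \<tau> \<le> real n * \<tau>" using that assms(1) by (intro mult_right_mono) simp_all
    then show "\<tau> \<le> 1 - real k * \<tau>" using assms(2) by (simp add: algebra_simps)
  qed (use assms(1) in simp)
  then show ?thesis by (simp add: slot_sum_def)
qed

lemma is_wderiv01_slot_sum:
  assumes f: "\<And>y. (f has_real_derivative f' y) (at y)" and "continuous_on UNIV f'"
    and bound: "\<And>y. \<bar>f' y\<bar> \<le> B" and "0 \<le> B" "\<tau> > 0"
  shows "is_wderiv01 (slot_sum \<tau> n f) (slot_deriv \<tau> n f')"
proof -
  let ?g = "slot_deriv \<tau> n f'"
  have [measurable]: "?g \<in> borel_measurable lborel" by (rule slot_deriv_measurable[OF assms(2)])
  have one: "set_integrable lborel {0..1::real} (\<lambda>_. 1::real)" by (simp add: borel_integrable_atLeastAtMost')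
  have g: "\<bar>?g x\<bar> \<le> B" for x by (rule abs_slot_deriv_le[OF \<open>\<tau> > 0\<close> \<open>0 \<le> B\<close> bound])
  have g2: "\<bar>(?g x)^2\<bar> \<le> B^2" for x using power_mono[OF g[of x], of 2] by simp
  have int: "set_integrable lborel {0..1} ?g"
    using set_integrable_bounded_mult[OF one, where g = ?g and B = B] g by simp
  have "set_integrable lborel {0..1} (\<lambda>x. (?g x)^2)"
    using set_integrable_bounded_mult[OF one, where g = "\<lambda>x. (?g x)^2" and B = "B^2"] g2 by simp
  moreover have "slot_sum \<tau> n f x = slot_sum \<tau> n f 0 + (LINT t:{0..x}|lborel. ?g t)" if "x \<in> {0..1}" for x
  proof -
    have "set_integrable lborel {0..x} ?g" by (rule set_integrable_subset[OF int]) (use that in auto)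
    then have "(LINT t:{0..x}|lborel. ?g t) = integral {0..x} ?g"
      by (rule set_borel_integral_eq_integral(2))
    also have "\<dots> = slot_sum \<tau> n f x - slot_sum \<tau> n f 0"
      using slot_sum_has_integral[OF f \<open>\<tau> > 0\<close>, of 0 x n] that by (simp add: integral_unique)
    finally show ?thesis by simp
  qed
  ultimately show ?thesis unfolding is_wderiv01_def
    using int \<open>?g \<in> borel_measurable lborel\<close> by blast
qed

section \<open>A train of kinks has negative energy\<close>

text \<open>The sine-Gordon kink \<pi>/2 + arctan (sinh (r y - T)), with its amplitude around \<pi>/2 stretched
  by \<gamma>; on [0, 2 T / r] it rises from 0 to \<pi> when \<gamma> arctan (sinh T) = \<pi>/2.\<close>

definition kink :: "real \<Rightarrow> real \<Rightarrow> real \<Rightarrow> real \<Rightarrow> real" where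
  "kink \<gamma> T r y = pi/2 + \<gamma> * arctan (sinh (r*y - T))"

definition kink_deriv :: "real \<Rightarrow> real \<Rightarrow> real \<Rightarrow> real \<Rightarrow> real" where
  "kink_deriv \<gamma> T r y = \<gamma> * r / cosh (r*y - T)"

definition kink_energy :: "real \<Rightarrow> real \<Rightarrow> real \<Rightarrow> real \<Rightarrow> real" where
  "kink_energy \<gamma> T r y = \<gamma>^2 * r * tanh (r*y - T)"

lemma kink_has_derivative: "(kink \<gamma> T r has_real_derivative kink_deriv \<gamma> T r y) (at y)"
proof -
  have "((\<lambda>z. r*z - T) has_real_derivative r) (at y)"
    by (auto intro!: derivative_eq_intros)
  then have "((\<lambda>z. pi/2 + \<gamma> * arctan (sinh (r*z - T))) has_real_derivative
      0 + \<gamma> * (inverse (1 + (sinh (r*y - T))^2) * (cosh (r*y - T) * r))) (at y)"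
    by (intro DERIV_add DERIV_const DERIV_cmult DERIV_chain2[OF DERIV_arctan] has_field_derivative_sinh)
  moreover have "1 + (sinh (r*y - T))^2 = (cosh (r*y - T))^2" using cosh_square_eq[of "r*y - T"] by simp
  ultimately show ?thesis
    unfolding kink_def[abs_def] kink_deriv_def by (simp add: field_simps power2_eq_square)
qed

lemma kink_energy_has_derivative: "(kink_energy \<gamma> T r has_real_derivative (kink_deriv \<gamma> T r y)^2) (at y)"
proof -
  have "((\<lambda>z. r*z - T) has_real_derivative r) (at y)"
    by (auto intro!: derivative_eq_intros)
  then have "((\<lambda>z. \<gamma>^2 * r * (sinh (r*z - T) / cosh (r*z - T))) has_real_derivative
      \<gamma>^2 * r * ((cosh (r*y - T) * r * cosh (r*y - T) - sinh (r*y - T) * (sinh (r*y - T) * r))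
        / (cosh (r*y - T) * cosh (r*y - T)))) (at y)"
    by (intro DERIV_cmult DERIV_divide has_field_derivative_sinh has_field_derivative_cosh) simp_all
  moreover have "(cosh (r*y - T))^2 - (sinh (r*y - T))^2 = 1" using cosh_square_eq[of "r*y - T"] by simp
  ultimately show ?thesis
    unfolding kink_energy_def[abs_def] kink_deriv_def tanh_def
    by (simp add: field_simps power2_eq_square)
qed

lemma continuous_on_kink_deriv: "continuous_on UNIV (kink_deriv \<gamma> T r)"
  unfolding kink_deriv_def[abs_def] by (intro continuous_intros) (simp add: less_imp_neq[symmetric])

lemma abs_kink_deriv_le:
  assumes "0 \<le> \<gamma>" "0 \<le> r"
  shows "\<bar>kink_deriv \<gamma> T r y\<bar> \<le> \<gamma> * r"
proof -
  have "1 \<le> cosh (r*y - T)" by (rule cosh_real_ge_1)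
  then have "\<gamma> * r / cosh (r*y - T) \<le> \<gamma> * r / 1"
    using assms by (intro divide_left_mono) simp_all
  then show ?thesis unfolding kink_deriv_def using assms by simp
qed

lemma kink_endpoints:
  assumes "\<gamma> * arctan (sinh T) = pi/2" "r > 0"
  shows "kink \<gamma> T r 0 = 0" "kink \<gamma> T r (2*T/r) = pi"
  using assms by (simp_all add: kink_def arctan_minus)

lemma abs_arctan_sinh_le:
  fixes s T :: real
  assumes "\<bar>s\<bar> \<le> T"
  shows "\<bar>arctan (sinh s)\<bar> \<le> arctan (sinh T)"
proof -
  have "\<bar>sinh s\<bar> = sinh \<bar>s\<bar>"
    by (cases "s \<ge> 0") (simp_all add: sinh_minus abs_if sinh_real_nonneg_iff sinh_real_neg_iff)
  also have "\<dots> \<le> sinh T" using assms by (simp only: sinh_real_le_iff)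
  finally have "arctan \<bar>sinh s\<bar> \<le> arctan (sinh T)" by (simp add: arctan_le_iff)
  moreover have "\<bar>arctan (sinh s)\<bar> = arctan \<bar>sinh s\<bar>"
    by (simp add: abs_if arctan_minus arctan_less_zero_iff)
  ultimately show ?thesis by simp
qed

lemma cos_sq_mult_le:
  fixes \<gamma> w :: real
  assumes "1 \<le> \<gamma>" "\<gamma> * \<bar>w\<bar> \<le> pi/2"
  shows "(cos (\<gamma> * w))^2 \<le> (cos w)^2"
proof -
  have "cos (\<gamma> * \<bar>w\<bar>) \<le> cos \<bar>w\<bar>"
    using assms pi_gt3 by (intro cos_monotone_0_pi_le) (simp_all add: mult_le_cancel_right1)
  moreover have "0 \<le> cos (\<gamma> * \<bar>w\<bar>)"
    using assms pi_gt3 by (intro cos_ge_zero) (simp_all add: order_trans[OF _ mult_nonneg_nonneg])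
  ultimately have "(cos (\<gamma> * \<bar>w\<bar>))^2 \<le> (cos \<bar>w\<bar>)^2" by (rule power_mono)
  moreover have "cos (\<gamma> * \<bar>w\<bar>) = cos (\<gamma> * w)" "cos \<bar>w\<bar> = cos w"
    by (simp_all add: abs_if)
  ultimately show ?thesis by simp
qed

lemma sin_sq_kink_le:
  assumes "1 \<le> \<gamma>" "\<gamma> * arctan (sinh T) = pi/2" "r > 0" "0 \<le> y" "y \<le> 2*T/r"
  shows "r^2 * (sin (kink \<gamma> T r y))^2 \<le> (kink_deriv \<gamma> T r y)^2"
proof -
  define s where "s = r*y - T"
  define w where "w = arctan (sinh s)"
  have "0 \<le> r*y" "r*y \<le> 2*T" using assms(3-5) by (simp_all add: field_simps)
  then have "\<bar>s\<bar> \<le> T" unfolding s_def by simp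
  then have "\<gamma> * \<bar>w\<bar> \<le> pi/2"
    using abs_arctan_sinh_le[of s T] assms(1,2) unfolding w_def
    by (metis mult_left_mono order_trans linear not_one_le_zero)
  then have "(sin (kink \<gamma> T r y))^2 \<le> (cos w)^2"
    using cos_sq_mult_le[OF assms(1)] unfolding kink_def w_def s_def by (simp add: sin_add)
  also have "(cos w)^2 = 1 / (cosh s)^2"
    using cosh_square_eq[of s] unfolding w_def cos_arctan by (simp add: power_divide)
  finally have "r^2 * (sin (kink \<gamma> T r y))^2 \<le> 1 * (r^2 / (cosh s)^2)"
    by (simp add: mult_left_mono divide_inverse)
  also have "\<dots> \<le> \<gamma>^2 * (r^2 / (cosh s)^2)"
    using assms(1) by (intro mult_right_mono) (simp_all add: one_le_power)
  also have "\<dots> = (kink_deriv \<gamma> T r y)^2" unfolding kink_deriv_def s_def by (simp add: power_divide power_mult_distrib)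
  finally show ?thesis .
qed

lemma sin_sq_add_sum_zero_or_pi:
  fixes c :: "nat \<Rightarrow> real"
  assumes "\<forall>k<n. c k = 0 \<or> c k = pi"
  shows "(sin (t + (\<Sum>k<n. c k)))^2 = (sin t)^2"
  using assms
proof (induction n)
  case (Suc n)
  then have "c n = 0 \<or> c n = pi" by simp
  then have "(sin ((t + (\<Sum>k<n. c k)) + c n))^2 = (sin (t + (\<Sum>k<n. c k)))^2"
    by (auto simp: sin_periodic_pi)
  then show ?case using Suc by (simp add: add.assoc)
qed simp

lemma sin_sq_kink_train_le:
  assumes "1 \<le> \<gamma>" "\<gamma> * arctan (sinh T) = pi/2" "r > 0" "T > 0"
  defines "\<tau> \<equiv> 2*T/r"
  shows "r^2 * (sin (slot_sum \<tau> n (kink \<gamma> T r) x))^2 \<le> (slot_deriv \<tau> n (kink_deriv \<gamma> T r) x)^2"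
proof -
  have \<tau>: "\<tau> > 0" unfolding \<tau>_def using assms(3,4) by simp
  note ends = kink_endpoints[OF assms(2,3), folded \<tau>_def]
  \<comment> \<open>off its own slot every kink is frozen at 0 or \<pi>, which sin^2 does not see\<close>
  define a where "a k = (if in_slot \<tau> k x then kink \<gamma> T r (x - real k * \<tau>) else 0)" for k
  define c where "c k = (if in_slot \<tau> k x then 0 else if \<tau> \<le> x - real k * \<tau> then pi else 0)" for k
  have "kink \<gamma> T r (clip \<tau> (x - real k * \<tau>)) = a k + c k" for k
  proof -
    consider "in_slot \<tau> k x" | "\<not> in_slot \<tau> k x" "\<tau> \<le> x - real k * \<tau>" | "x - real k * \<tau> \<le> 0"
      unfolding in_slot_def by fastforce
    then show ?thesis
      by cases (use \<tau> ends in \<open>auto simp: a_def c_def in_slot_def clip_mid clip_ge clip_nonpos\<close>)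
  qed
  then have "slot_sum \<tau> n (kink \<gamma> T r) x = (\<Sum>k<n. a k) + (\<Sum>k<n. c k)"
    unfolding slot_sum_def by (simp add: sum.distrib)
  then have sin: "(sin (slot_sum \<tau> n (kink \<gamma> T r) x))^2 = (sin (\<Sum>k<n. a k))^2"
    using sin_sq_add_sum_zero_or_pi[of n c "\<Sum>k<n. a k"] unfolding c_def by simp
  show ?thesis
  proof (cases rule: slot_deriv_cases[OF \<tau>, of n "kink_deriv \<gamma> T r" x])
    case 1
    then have "(\<Sum>k<n. a k) = 0" unfolding a_def by simp
    then show ?thesis using sin by simp
  next
    case (2 j)
    then have "(\<Sum>k<n. a k) = kink \<gamma> T r (x - real j * \<tau>)"
      unfolding a_def by (simp only: 2(3))
    moreover have "0 \<le> x - real j * \<tau>" "x - real j * \<tau> \<le> 2*T/r"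
      using 2(2) unfolding in_slot_def \<tau>_def by auto
    ultimately show ?thesis using sin 2(4) sin_sq_kink_le[OF assms(1-3)] by simp
  qed
qed

lemma set_integral_kink_train_deriv_sq:
  assumes "0 \<le> \<gamma>" "r > 0" "T > 0" "real n * (2*T/r) \<le> 1"
  shows "(LINT x:{0..1}|lborel. (slot_deriv (2*T/r) n (kink_deriv \<gamma> T r) x)^2) \<le> 2 * real n * \<gamma>^2 * r"
proof -
  let ?\<tau> = "2*T/r"
  have \<tau>: "?\<tau> > 0" using assms(2,3) by simp
  have int: "set_integrable lborel {0..1} (\<lambda>x. (slot_deriv ?\<tau> n (kink_deriv \<gamma> T r) x)^2)"
    using is_wderiv01D(3)[OF is_wderiv01_slot_sum[OF kink_has_derivative continuous_on_kink_deriv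
          abs_kink_deriv_le _ \<tau>]] assms by simp
  have "(LINT x:{0..1}|lborel. (slot_deriv ?\<tau> n (kink_deriv \<gamma> T r) x)^2)
      = integral {0..1} (slot_deriv ?\<tau> n (\<lambda>y. (kink_deriv \<gamma> T r y)^2))"
    using set_borel_integral_eq_integral(2)[OF int] by (simp add: slot_deriv_sq[OF \<tau>])
  also have "\<dots> = slot_sum ?\<tau> n (kink_energy \<gamma> T r) 1 - slot_sum ?\<tau> n (kink_energy \<gamma> T r) 0"
    by (rule integral_unique[OF slot_sum_has_integral[OF kink_energy_has_derivative \<tau>]]) simp
  also have "\<dots> = real n * (kink_energy \<gamma> T r ?\<tau> - kink_energy \<gamma> T r 0)"
    using slot_sum_0[OF \<tau>] slot_sum_1[OF \<tau> assms(4)] by (simp add: algebra_simps)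
  also have "\<dots> = real n * (2 * \<gamma>^2 * r * tanh T)"
    using assms(2) by (simp add: kink_energy_def tanh_minus algebra_simps)
  also have "\<dots> \<le> real n * (2 * \<gamma>^2 * r * 1)"
    using tanh_real_lt_1[of T] assms(2) by (intro mult_left_mono) simp_all
  finally show ?thesis by simp
qed

lemma F_kink_train_le:
  assumes "1 \<le> \<gamma>" "\<gamma> * arctan (sinh T) = pi/2" "r > 0" "T > 0" "real n * (2*T/r) \<le> 1"
  defines "\<psi> \<equiv> slot_sum (2*T/r) n (kink \<gamma> T r)"
  shows "\<psi> \<in> J_class" "F (1/r) (\<kappa>t * r) \<psi> \<le> real n * r * (\<gamma>^2 - \<kappa>t * pi) / 2"
proof -
  let ?\<tau> = "2*T/r" and ?g = "slot_deriv (2*T/r) n (kink_deriv \<gamma> T r)"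
  have \<tau>: "?\<tau> > 0" using assms(3,4) by simp
  note ends = kink_endpoints[OF assms(2,3)]
  have w: "is_wderiv01 \<psi> ?g"
    unfolding \<psi>_def using assms(1,3)
    by (intro is_wderiv01_slot_sum[OF kink_has_derivative continuous_on_kink_deriv abs_kink_deriv_le _ \<tau>])
      simp_all
  have h: "H1_01 \<psi>" by (rule H1_01I[OF w])
  have \<psi>0: "\<psi> 0 = 0" and \<psi>1: "\<psi> 1 = real n * pi"
    unfolding \<psi>_def using slot_sum_0[OF \<tau>] slot_sum_1[OF \<tau> assms(5)] ends by simp_all
  show "\<psi> \<in> J_class" unfolding J_class_def using h \<psi>0 by simp
  have sq: "(LINT x:{0..1}|lborel. (wderiv01 \<psi> x)^2) \<le> 2 * real n * \<gamma>^2 * r"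
    using set_integral_wderiv01_sq[OF w] set_integral_kink_train_deriv_sq[of \<gamma> r T n] assms by simp
  have "r^2 * (LINT x:{0..1}|lborel. (sin (\<psi> x))^2) = (LINT x:{0..1}|lborel. (sin (\<psi> x))^2 * r^2)"
    by simp
  also have "\<dots> \<le> (LINT x:{0..1}|lborel. (?g x)^2)"
    using set_integrable_sin_sq[OF is_wderiv01_continuous_on[OF w]] is_wderiv01D(3)[OF w]
      sin_sq_kink_train_le[OF assms(1-4)] unfolding \<psi>_def
    by (intro set_integral_mono) (simp_all add: mult.commute)
  also have "\<dots> = (LINT x:{0..1}|lborel. (wderiv01 \<psi> x)^2)" by (rule set_integral_wderiv01_sq[OF w, symmetric])
  finally have sin: "r^2 * (LINT x:{0..1}|lborel. (sin (\<psi> x))^2) \<le> (LINT x:{0..1}|lborel. (wderiv01 \<psi> x)^2)" .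
  have "F (1/r) (\<kappa>t * r) \<psi> = 1/8 * (LINT x:{0..1}|lborel. (wderiv01 \<psi> x)^2)
      + 1/8 * (r^2 * (LINT x:{0..1}|lborel. (sin (\<psi> x))^2)) - \<kappa>t * r / 2 * (real n * pi)"
    unfolding F_eq[OF h] set_integral_wderiv01[OF h] \<psi>0 \<psi>1 by (simp add: power_divide)
  also have "\<dots> \<le> 1/4 * (2 * real n * \<gamma>^2 * r) - \<kappa>t * r / 2 * (real n * pi)"
    using sin sq by linarith
  also have "\<dots> = real n * r * (\<gamma>^2 - \<kappa>t * pi) / 2" by (simp add: algebra_simps)
  finally show "F (1/r) (\<kappa>t * r) \<psi> \<le> real n * r * (\<gamma>^2 - \<kappa>t * pi) / 2" .
qed

lemma kink_width_exists:
  assumes "1 < \<gamma>"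
  obtains T where "T > 0" "\<gamma> * arctan (sinh T) = pi/2"
proof -
  define \<theta> where "\<theta> = pi/(2*\<gamma>)"
  have \<theta>: "0 < \<theta>" "\<theta> < pi/2" unfolding \<theta>_def using assms by (simp_all add: field_simps)
  show ?thesis
  proof
    show "arsinh (tan \<theta>) > 0" using tan_gt_zero[OF \<theta>] by (simp add: arsinh_real_pos_iff)
    have "arctan (sinh (arsinh (tan \<theta>))) = \<theta>" using \<theta> by (simp add: arctan_tan)
    then show "\<gamma> * arctan (sinh (arsinh (tan \<theta>))) = pi/2" unfolding \<theta>_def using assms by simp
  qed
qed

lemma INF_F_le_neg_sq:
  assumes "\<kappa>t > 1/pi"
  obtains c r0 where "c > 0" "\<And>r. r \<ge> r0 \<Longrightarrow> (INF \<psi>\<in>J_class. F (1/r) (\<kappa>t * r) \<psi>) \<le> - c * r^2"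
proof -
  have ktp: "\<kappa>t * pi > 1" using assms pi_gt_zero by (simp add: divide_less_eq)
  \<comment> \<open>1 < \<gamma>^2 < \<kappa>t \<pi>: each kink gains more through the \<kappa>-term than it costs\<close>
  define \<gamma> where "\<gamma> = sqrt ((1 + \<kappa>t * pi)/2)"
  have \<gamma>2: "\<gamma>^2 = (1 + \<kappa>t * pi)/2" and \<gamma>1: "\<gamma> > 1" unfolding \<gamma>_def using ktp by simp_all
  obtain T where T: "T > 0" "\<gamma> * arctan (sinh T) = pi/2" using kink_width_exists[OF \<gamma>1] by blast
  define c where "c = (\<kappa>t * pi - 1) / (16 * T)"
  have "(INF \<psi>\<in>J_class. F (1/r) (\<kappa>t * r) \<psi>) \<le> - c * r^2" if r: "r \<ge> 4*T" for r
  proof -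
    have "r > 0" using r T by simp
    define y where "y = r / (2*T)"
    define n where "n = nat \<lfloor>y\<rfloor>"
    have y2: "y \<ge> 2" unfolding y_def using r T by (simp add: field_simps)
    then have n: "real n \<le> y" "y / 2 \<le> real n" unfolding n_def by linarith+
    have "real n * (2*T/r) \<le> y * (2*T/r)" using n T \<open>r > 0\<close> by (intro mult_right_mono) simp_all
    also have "\<dots> = 1" unfolding y_def using T \<open>r > 0\<close> by simp
    finally have "real n * (2*T/r) \<le> 1" .
    note train = F_kink_train_le[OF less_imp_le[OF \<gamma>1] T(2) \<open>r > 0\<close> T(1) this]
    have "(INF \<psi>\<in>J_class. F (1/r) (\<kappa>t * r) \<psi>) \<le> real n * r * (\<gamma>^2 - \<kappa>t * pi) / 2"
      using INF_F_le[OF train(1)] train(2)[of \<kappa>t] by (rule order_trans)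
    also have "\<dots> = real n * (r * (1 - \<kappa>t * pi) / 4)" unfolding \<gamma>2 by (simp add: field_simps)
    also have "\<dots> \<le> (y/2) * (r * (1 - \<kappa>t * pi) / 4)"
      using ktp \<open>r > 0\<close> n by (intro mult_right_mono_neg) (simp_all add: mult_nonneg_nonpos)
    also have "\<dots> = - c * r^2" unfolding y_def c_def using T by (simp add: field_simps power2_eq_square)
    finally show ?thesis .
  qed
  moreover have "c > 0" unfolding c_def using ktp T by simp
  ultimately show ?thesis using that by blast
qed

section \<open>Estimates for a minimizer\<close>

lemma squeeze_bounds:
  fixes G m Fp E \<kappa> \<eta> lam :: real
  assumes "G \<le> m" "m \<le> Fp" "- (\<kappa>^2 / 2) \<le> m" "m \<le> 0" "0 \<le> E" "0 \<le> \<eta>" "\<eta> \<le> 1/8"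
    "1 - 4 * \<eta> \<le> lam" and lower: "E + lam * (Fp + \<kappa>^2/2) - \<kappa>^2/2 \<le> G"
  shows "m - G \<le> 2 * \<eta> * \<kappa>^2" "Fp - m \<le> 4 * \<eta> * \<kappa>^2" "E \<le> 2 * \<eta> * \<kappa>^2"
proof -
  define M where "M = m + \<kappa>^2/2"
  have M: "0 \<le> M" "M \<le> \<kappa>^2/2" unfolding M_def using assms(3,4) by simp_all
  have lam: "1/2 \<le> lam" using assms(7,8) by simp
  have "lam * M \<le> lam * (Fp + \<kappa>^2/2)" using lam assms(2) unfolding M_def by (intro mult_left_mono) simp_all
  then have gap: "E + lam * (Fp - m) \<le> M - lam * M"
    using lower assms(1) unfolding M_def by (simp add: algebra_simps)
  have "M - lam * M = (1 - lam) * M" by (simp add: algebra_simps)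
  also have "\<dots> \<le> 4 * \<eta> * (\<kappa>^2/2)" using assms(6,8) M by (intro mult_mono) simp_all
  finally have small: "M - lam * M \<le> 2 * \<eta> * \<kappa>^2" by simp
  have "0 \<le> lam * (Fp - m)" using lam assms(2) by simp
  then show "E \<le> 2 * \<eta> * \<kappa>^2" using gap small by linarith
  have "lam * M \<le> G + \<kappa>^2/2 - E" using lower \<open>lam * M \<le> _\<close> by linarith
  then show "m - G \<le> 2 * \<eta> * \<kappa>^2" using small assms(5) unfolding M_def by linarith
  have "(1/2) * (Fp - m) \<le> lam * (Fp - m)" using lam assms(2) by (intro mult_right_mono) simp_all
  then have "(1/2) * (Fp - m) \<le> 2 * \<eta> * \<kappa>^2" using gap small assms(5) by linarith
  then show "Fp - m \<le> 4 * \<eta> * \<kappa>^2" by simp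
qed

lemma le_of_sq_le_mult:
  fixes E a :: real
  assumes "0 \<le> E" "0 \<le> a" "E^2 \<le> E * a"
  shows "E \<le> a"
  using assms by (cases "E = 0") (simp_all add: power2_eq_square mult_le_cancel_left_pos)

definition nonneg_minimizer :: "real \<Rightarrow> real \<Rightarrow> real \<Rightarrow> (real \<Rightarrow> real) \<Rightarrow> (real \<Rightarrow> real) \<Rightarrow> bool" where
  "nonneg_minimizer \<epsilon> \<delta> \<kappa> v \<phi> \<longleftrightarrow> admissible v \<phi> \<and> (\<forall>x\<in>{0..1}. 0 \<le> v x) \<and>
     (\<forall>w \<psi>. admissible w \<psi> \<longrightarrow> G \<epsilon> \<delta> \<kappa> v \<phi> \<le> G \<epsilon> \<delta> \<kappa> w \<psi>)"

lemma minimizer_squeeze: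
  assumes min: "nonneg_minimizer \<epsilon> \<delta> \<kappa> v \<phi>" and "0 < \<epsilon>" "\<epsilon> \<le> 1" "0 < \<delta>"
    and m_nonpos: "(INF \<psi>\<in>J_class. F (\<epsilon> / sqrt \<delta>) \<kappa> \<psi>) \<le> 0"
    and small: "sqrt (32 * \<epsilon> * GL_energy \<epsilon> v) \<le> 1/8"
  defines "m \<equiv> INF \<psi>\<in>J_class. F (\<epsilon> / sqrt \<delta>) \<kappa> \<psi>" and "\<eta> \<equiv> sqrt (32 * \<epsilon> * GL_energy \<epsilon> v)"
  shows "G \<epsilon> \<delta> \<kappa> v \<phi> \<le> m" "m - G \<epsilon> \<delta> \<kappa> v \<phi> \<le> 2 * \<eta> * \<kappa>^2"
    "m \<le> G \<epsilon> \<delta> \<kappa> (\<lambda>_. 1) \<phi>" "G \<epsilon> \<delta> \<kappa> (\<lambda>_. 1) \<phi> - m \<le> 4 * \<eta> * \<kappa>^2"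
    "GL_energy \<epsilon> v \<le> 2 * \<eta> * \<kappa>^2"
proof -
  have adm: "admissible v \<phi>" and nonneg: "\<And>x. x \<in> {0..1} \<Longrightarrow> 0 \<le> v x"
    and minimal: "\<forall>w \<psi>. admissible w \<psi> \<longrightarrow> G \<epsilon> \<delta> \<kappa> v \<phi> \<le> G \<epsilon> \<delta> \<kappa> w \<psi>"
    using min unfolding nonneg_minimizer_def by auto
  have \<eta>: "0 \<le> \<eta>" "\<eta> \<le> 1/8" unfolding \<eta>_def using small GL_energy_nonneg[of \<epsilon> v] \<open>0 < \<epsilon>\<close> by simp_all
  show Gm: "G \<epsilon> \<delta> \<kappa> v \<phi> \<le> m"
    unfolding m_def by (rule minimizer_le_INF_F[OF \<open>0 < \<epsilon>\<close> \<open>0 < \<delta>\<close> minimal])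
  have close: "1 - \<eta> \<le> v x" if "x \<in> {0..1}" for x
  proof -
    have "H1_01 v" using adm unfolding admissible_def by blast
    then have "(v x - 1)^2 \<le> \<eta>^2"
      using dist_one_sq_le_GL_energy[of v, OF _ nonneg \<open>0 < \<epsilon>\<close> \<open>\<epsilon> \<le> 1\<close> that]
        GL_energy_nonneg[of \<epsilon> v] \<open>0 < \<epsilon>\<close>
      unfolding \<eta>_def by simp
    then show ?thesis using \<open>0 \<le> \<eta>\<close> by (simp add: abs_le_square_iff[symmetric])
  qed
  have pos: "0 < v x" if "x \<in> {0..1}" for x using close[OF that] \<eta>(2) by linarith
  then have J: "\<phi> \<in> J_class" using admissible_nonvanishing(1)[OF adm] by force
  have G1: "G \<epsilon> \<delta> \<kappa> (\<lambda>_. 1) \<phi> = F (\<epsilon> / sqrt \<delta>) \<kappa> \<phi>"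
    using G_const_one_eq_F[OF admissible_nonvanishing(2,3)[OF adm] _ \<open>0 < \<epsilon>\<close> \<open>0 < \<delta>\<close>] J pos
    unfolding J_class_def by force
  have mF: "m \<le> F (\<epsilon> / sqrt \<delta>) \<kappa> \<phi>" unfolding m_def by (rule INF_F_le[OF J])
  then show "m \<le> G \<epsilon> \<delta> \<kappa> (\<lambda>_. 1) \<phi>" using G1 by simp
  have "1 - 4 * \<eta> \<le> (1 - \<eta>)^4" using Bernoulli_inequality[of "- \<eta>" 4] \<eta> by simp
  moreover have "GL_energy \<epsilon> v + (1 - \<eta>)^4 * (F (\<epsilon> / sqrt \<delta>) \<kappa> \<phi> + \<kappa>^2/2) - \<kappa>^2/2 \<le> G \<epsilon> \<delta> \<kappa> v \<phi>"
    using G_ge_GL_energy_F[OF adm \<open>0 < \<epsilon>\<close> \<open>0 < \<delta>\<close>, of "1 - \<eta>"] close \<eta> by simp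
  ultimately show "m - G \<epsilon> \<delta> \<kappa> v \<phi> \<le> 2 * \<eta> * \<kappa>^2"
      "G \<epsilon> \<delta> \<kappa> (\<lambda>_. 1) \<phi> - m \<le> 4 * \<eta> * \<kappa>^2" "GL_energy \<epsilon> v \<le> 2 * \<eta> * \<kappa>^2"
    using squeeze_bounds[OF Gm mF _ m_nonpos[folded m_def] GL_energy_nonneg \<eta>] INF_F_ge G1
    unfolding m_def by auto
qed

lemma minimizer_estimates:
  assumes min: "nonneg_minimizer \<epsilon> \<delta> \<kappa> v \<phi>" and "0 < \<epsilon>" "\<epsilon> \<le> 1" "0 < \<delta>" "0 \<le> \<kappa>"
    and m_nonpos: "(INF \<psi>\<in>J_class. F (\<epsilon> / sqrt \<delta>) \<kappa> \<psi>) \<le> 0"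
    and small: "\<kappa> * sqrt \<epsilon> \<le> 1/32"
  defines "m \<equiv> INF \<psi>\<in>J_class. F (\<epsilon> / sqrt \<delta>) \<kappa> \<psi>"
  shows "G \<epsilon> \<delta> \<kappa> v \<phi> \<le> m" "m - G \<epsilon> \<delta> \<kappa> v \<phi> \<le> 16 * (\<kappa> * sqrt \<epsilon>) * \<kappa>^2"
    "m \<le> G \<epsilon> \<delta> \<kappa> (\<lambda>_. 1) \<phi>" "G \<epsilon> \<delta> \<kappa> (\<lambda>_. 1) \<phi> - m \<le> 16 * (\<kappa> * sqrt \<epsilon>) * \<kappa>^2"
    "GL_energy \<epsilon> v \<le> 128 * \<epsilon> * \<kappa>^4"
proof -
  define E where "E = GL_energy \<epsilon> v"
  define \<eta> where "\<eta> = sqrt (32 * \<epsilon> * E)"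
  have E: "0 \<le> E" unfolding E_def by (rule GL_energy_nonneg)
  have "E - \<kappa>^2/2 \<le> G \<epsilon> \<delta> \<kappa> v \<phi>"
    using G_ge_GL_energy[of v \<phi> \<delta> \<epsilon> \<kappa>] min \<open>0 < \<delta>\<close> unfolding E_def nonneg_minimizer_def by simp
  also have "\<dots> \<le> m"
    unfolding m_def using min minimizer_le_INF_F[OF \<open>0 < \<epsilon>\<close> \<open>0 < \<delta>\<close>]
    unfolding nonneg_minimizer_def by blast
  finally have "E - \<kappa>^2/2 \<le> m" .
  then have "\<eta> \<le> sqrt (16 * \<epsilon> * \<kappa>^2)" unfolding \<eta>_def using m_nonpos \<open>0 < \<epsilon>\<close> by (simp add: m_def)
  also have "\<dots> = 4 * (\<kappa> * sqrt \<epsilon>)" using \<open>0 < \<epsilon>\<close> \<open>0 \<le> \<kappa>\<close> by (simp add: real_sqrt_mult)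
  finally have \<eta>: "\<eta> \<le> 4 * (\<kappa> * sqrt \<epsilon>)" "\<eta> \<le> 1/8" "0 \<le> \<eta>"
    using small E \<open>0 < \<epsilon>\<close> unfolding \<eta>_def by simp_all
  note squeeze = minimizer_squeeze[OF min \<open>0 < \<epsilon>\<close> \<open>\<epsilon> \<le> 1\<close> \<open>0 < \<delta>\<close> m_nonpos \<eta>(2)[unfolded \<eta>_def E_def],
      folded m_def E_def, folded \<eta>_def]
  show "G \<epsilon> \<delta> \<kappa> v \<phi> \<le> m" "m \<le> G \<epsilon> \<delta> \<kappa> (\<lambda>_. 1) \<phi>" by (fact squeeze(1,3))+
  have "4 * \<eta> * \<kappa>^2 \<le> 16 * (\<kappa> * sqrt \<epsilon>) * \<kappa>^2" using \<eta>(1) by (intro mult_right_mono) simp_all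
  then show "m - G \<epsilon> \<delta> \<kappa> v \<phi> \<le> 16 * (\<kappa> * sqrt \<epsilon>) * \<kappa>^2"
    "G \<epsilon> \<delta> \<kappa> (\<lambda>_. 1) \<phi> - m \<le> 16 * (\<kappa> * sqrt \<epsilon>) * \<kappa>^2"
    using squeeze(2,4) mult_nonneg_nonneg[OF \<eta>(3) zero_le_power2[of \<kappa>]] by linarith+
  have "E^2 \<le> (2 * \<eta> * \<kappa>^2)^2" using squeeze(5) E by (intro power_mono)
  also have "\<dots> = E * (128 * \<epsilon> * \<kappa>^4)"
    unfolding power_mult_distrib \<eta>_def using E \<open>0 < \<epsilon>\<close> by (simp add: power2_eq_square power4_eq_xxxx)
  finally show "GL_energy \<epsilon> v \<le> 128 * \<epsilon> * \<kappa>^4"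
    using le_of_sq_le_mult[OF E] \<open>0 < \<epsilon>\<close> unfolding E_def by simp
qed

lemma energy_le_twice_GL_energy:
  fixes v :: "real \<Rightarrow> real"
  assumes "0 < \<epsilon>"
  defines "Q \<equiv> (LINT x:{0..1}|lborel. (wderiv01 v x)^2) + 1/(4*\<epsilon>^2) * (LINT x:{0..1}|lborel. ((v x)^2 - 1)^2)"
  shows "0 \<le> Q" "Q \<le> 2 * GL_energy \<epsilon> v"
proof -
  define A B where "A = (LINT x:{0..1}|lborel. (wderiv01 v x)^2)"
    and "B = (LINT x:{0..1}|lborel. (1 - (v x)^2)^2)"
  have "((v x)^2 - 1)^2 = (1 - (v x)^2)^2" for x by (simp add: power2_commute)
  then have Q: "Q = A + B / (4*\<epsilon>^2)" unfolding Q_def A_def B_def by simp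
  have "0 \<le> A" "0 \<le> B" unfolding A_def B_def by (simp_all add: set_integral_nonneg)
  moreover have "B / (4*\<epsilon>^2) \<le> B / (2*\<epsilon>^2)"
    using \<open>0 \<le> B\<close> assms(1) by (intro divide_left_mono) simp_all
  ultimately show "0 \<le> Q" "Q \<le> 2 * GL_energy \<epsilon> v"
    unfolding Q GL_energy_def A_def[symmetric] B_def[symmetric] by simp_all
qed

section \<open>Asymptotics\<close>

lemma smallo_of_error_bound:
  fixes f g e k :: "'a \<Rightarrow> real"
  assumes "c > 0" "(e \<longlongrightarrow> 0) net"
    and ev: "\<forall>\<^sub>F x in net. \<bar>f x\<bar> \<le> e x * k x \<and> c * k x \<le> \<bar>g x\<bar> \<and> 0 \<le> k x"
  shows "f \<in> o[net](g)"
proof (rule landau_o.smallI)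
  fix C :: real assume "C > 0"
  with \<open>c > 0\<close> have "C * c > 0" by simp
  show "\<forall>\<^sub>F x in net. norm (f x) \<le> C * norm (g x)"
    using order_tendstoD(2)[OF assms(2) \<open>C * c > 0\<close>] ev
  proof eventually_elim
    case (elim x)
    then have "\<bar>f x\<bar> \<le> (C * c) * k x" by (meson less_imp_le mult_right_mono order_trans)
    also have "\<dots> \<le> C * \<bar>g x\<bar>" using elim \<open>C > 0\<close> by (simp add: mult.assoc)
    finally show ?case by simp
  qed
qed

lemma smallo_of_squeeze:
  fixes Gv G1 m e k :: "'a \<Rightarrow> real"
  assumes "c > 0" "(e \<longlongrightarrow> 0) net"
    and ev: "\<forall>\<^sub>F x in net. Gv x \<le> m x \<and> m x - Gv x \<le> e x * k x \<and> m x \<le> G1 x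
      \<and> G1 x - m x \<le> e x * k x \<and> m x \<le> - c * k x \<and> 0 \<le> k x"
  shows "(\<lambda>x. Gv x - G1 x) \<in> o[net](G1)" "(\<lambda>x. Gv x - m x) \<in> o[net](m)"
proof -
  show "(\<lambda>x. Gv x - m x) \<in> o[net](m)"
    by (rule smallo_of_error_bound[OF \<open>c > 0\<close> assms(2)]) (use ev in \<open>eventually_elim, auto\<close>)
  have "((\<lambda>x. 4 * e x) \<longlongrightarrow> 0) net" using tendsto_mult_right_zero[OF assms(2), of 4] .
  moreover have "\<forall>\<^sub>F x in net. e x \<le> c / 2"
    using order_tendstoD(2)[OF assms(2), of "c / 2"] \<open>c > 0\<close> by (auto elim: eventually_mono)
  then have "\<forall>\<^sub>F x in net. \<bar>Gv x - G1 x\<bar> \<le> 4 * e x * k x \<and> c * k x \<le> \<bar>G1 x\<bar> * 2 \<and> 0 \<le> k x"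
    using ev
  proof eventually_elim
    case (elim x)
    then have "e x * k x \<le> c / 2 * k x" by (intro mult_right_mono) simp_all
    then show ?case using elim by auto
  qed
  ultimately have "(\<lambda>x. Gv x - G1 x) \<in> o[net](\<lambda>x. G1 x * 2)"
    by (intro smallo_of_error_bound[OF \<open>c > 0\<close>, where k = k]) (simp_all add: abs_mult)
  then show "(\<lambda>x. Gv x - G1 x) \<in> o[net](G1)" by simp
qed

lemma sq_div_cube_le:
  fixes \<epsilon> \<delta> K :: real
  assumes "0 < \<epsilon>" "\<epsilon> \<le> 1" "0 < \<delta>" "0 < K" "\<delta> \<le> K * \<epsilon> powr (3/2)"
  shows "\<delta>^2 / \<epsilon>^3 \<le> K powr (3/2) * (sqrt \<delta> / \<epsilon>)"
proof -
  have "\<delta> powr (3/2) \<le> (K * \<epsilon> powr (3/2)) powr (3/2)"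
    using assms(3,5) by (intro powr_mono2) simp_all
  also have "\<dots> = K powr (3/2) * \<epsilon> powr (9/4)" using assms(1,4) by (simp add: powr_mult powr_powr)
  also have "\<dots> \<le> K powr (3/2) * \<epsilon>^2"
    using assms(1,2) powr_mono'[of 2 "9/4" \<epsilon>] by (intro mult_left_mono) (simp_all add: powr_realpow)
  finally have "\<delta> powr (3/2) \<le> K powr (3/2) * \<epsilon>^2" .
  moreover have "\<delta>^2 = sqrt \<delta> * \<delta> powr (3/2)"
    using assms(3) by (simp add: powr_half_sqrt[symmetric] powr_add[symmetric] powr_realpow)
  ultimately have "\<delta>^2 / \<epsilon>^3 \<le> sqrt \<delta> * (K powr (3/2) * \<epsilon>^2) / \<epsilon>^3"
    using assms(1,3) by (intro divide_right_mono) simp_all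
  also have "\<dots> = K powr (3/2) * (sqrt \<delta> / \<epsilon>)" using assms(1) by (simp add: field_simps power2_eq_square power3_eq_cube)
  finally show ?thesis .
qed

lemma bigo_of_sq_div_cube:
  fixes Q \<delta> :: "real \<Rightarrow> real"
  assumes "\<delta> \<in> O[at_right 0](\<lambda>\<epsilon>. \<epsilon> powr (3/2))" "\<forall>\<^sub>F \<epsilon> in at_right 0. 0 < \<delta> \<epsilon>" "0 < C"
    and bound: "\<forall>\<^sub>F \<epsilon> in at_right 0. 0 \<le> Q \<epsilon> \<and> Q \<epsilon> \<le> C * (\<delta> \<epsilon>)^2 / \<epsilon>^3"
  shows "Q \<in> O[at_right 0](\<lambda>\<epsilon>. sqrt (\<delta> \<epsilon>) / \<epsilon>)"
proof -
  obtain K where "K > 0" and K: "\<forall>\<^sub>F \<epsilon> in at_right 0. norm (\<delta> \<epsilon>) \<le> K * norm (\<epsilon> powr (3/2))"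
    using landau_o.bigE[OF assms(1)] by blast
  have "\<forall>\<^sub>F \<epsilon> in at_right (0::real). 0 < \<epsilon> \<and> \<epsilon> \<le> 1"
    unfolding eventually_at_right_field by (intro exI[of _ 1]) auto
  then have "\<forall>\<^sub>F \<epsilon> in at_right 0. norm (Q \<epsilon>) \<le> (C * K powr (3/2)) * norm (sqrt (\<delta> \<epsilon>) / \<epsilon>)"
    using K assms(2) bound
  proof eventually_elim
    case (elim \<epsilon>)
    then have "Q \<epsilon> \<le> C * ((\<delta> \<epsilon>)^2 / \<epsilon>^3)" by simp
    also have "\<dots> \<le> C * (K powr (3/2) * (sqrt (\<delta> \<epsilon>) / \<epsilon>))"
      using elim \<open>K > 0\<close> \<open>0 < C\<close> by (intro mult_left_mono sq_div_cube_le) simp_all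
    finally show ?case using elim by simp
  qed
  then show ?thesis by (rule landau_o.bigI[rotated]) (use \<open>K > 0\<close> \<open>0 < C\<close> in simp)
qed

lemma tendsto_kappa_sqrt:
  fixes \<delta> :: "real \<Rightarrow> real"
  assumes "\<delta> \<in> o[at_right 0](\<lambda>\<epsilon>. \<epsilon>)" "\<forall>\<^sub>F \<epsilon> in at_right 0. 0 < \<delta> \<epsilon>"
  shows "((\<lambda>\<epsilon>. \<kappa>t * sqrt (\<delta> \<epsilon>) / \<epsilon> * sqrt \<epsilon>) \<longlongrightarrow> 0) (at_right 0)"
proof -
  have "((\<lambda>\<epsilon>. \<kappa>t * sqrt (\<delta> \<epsilon> / \<epsilon>)) \<longlongrightarrow> \<kappa>t * sqrt 0) (at_right 0)"
    by (intro tendsto_intros smalloD_tendsto[OF assms(1)])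
  moreover have "\<forall>\<^sub>F \<epsilon> in at_right 0. \<kappa>t * sqrt (\<delta> \<epsilon> / \<epsilon>) = \<kappa>t * sqrt (\<delta> \<epsilon>) / \<epsilon> * sqrt \<epsilon>"
    using eventually_at_right_less[of 0]
  proof eventually_elim
    case (elim \<epsilon>)
    then have "\<epsilon> = sqrt \<epsilon> * sqrt \<epsilon>" by simp
    then show ?case using elim by (simp add: real_sqrt_divide field_simps)
  qed
  ultimately show ?thesis by (simp add: tendsto_cong)
qed

lemma eventually_INF_F_le_neg:
  fixes \<delta> :: "real \<Rightarrow> real"
  assumes "\<kappa>t > 1/pi" "(\<lambda>\<epsilon>. \<epsilon>^2) \<in> o[at_right 0](\<delta>)" "\<forall>\<^sub>F \<epsilon> in at_right 0. 0 < \<delta> \<epsilon>"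
  obtains c where "c > 0" "\<forall>\<^sub>F \<epsilon> in at_right 0.
    (INF \<psi>\<in>J_class. F (\<epsilon> / sqrt (\<delta> \<epsilon>)) (\<kappa>t * sqrt (\<delta> \<epsilon>) / \<epsilon>) \<psi>) \<le> - c * (\<kappa>t * sqrt (\<delta> \<epsilon>) / \<epsilon>)^2"
proof -
  have "\<kappa>t > 0" using assms(1) by (smt (verit) pi_gt_zero divide_pos_pos)
  obtain c r0 where "c > 0" and INF_le: "\<And>r. r \<ge> r0 \<Longrightarrow> (INF \<psi>\<in>J_class. F (1/r) (\<kappa>t * r) \<psi>) \<le> - c * r^2"
    using INF_F_le_neg_sq[OF assms(1)] by blast
  have pos: "\<forall>\<^sub>F \<epsilon> in at_right 0. 0 < \<epsilon>^2 / \<delta> \<epsilon>"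
    using assms(3) eventually_at_right_less[of 0] by eventually_elim simp
  have "LIM \<epsilon> at_right 0. sqrt (inverse (\<epsilon>^2 / \<delta> \<epsilon>)) :> at_top"
    by (rule filterlim_compose[OF sqrt_at_top filterlim_inverse_at_top[OF smalloD_tendsto[OF assms(2)] pos]])
  moreover have "\<forall>\<^sub>F \<epsilon> in at_right 0. sqrt (inverse (\<epsilon>^2 / \<delta> \<epsilon>)) = sqrt (\<delta> \<epsilon>) / \<epsilon>"
    using eventually_at_right_less[of 0] by eventually_elim (simp add: real_sqrt_divide)
  ultimately have "LIM \<epsilon> at_right 0. sqrt (\<delta> \<epsilon>) / \<epsilon> :> at_top"
    by (simp add: filterlim_cong)
  then have "\<forall>\<^sub>F \<epsilon> in at_right 0. r0 \<le> sqrt (\<delta> \<epsilon>) / \<epsilon>" by (simp add: filterlim_at_top)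
  then have "\<forall>\<^sub>F \<epsilon> in at_right 0. (INF \<psi>\<in>J_class. F (\<epsilon> / sqrt (\<delta> \<epsilon>)) (\<kappa>t * sqrt (\<delta> \<epsilon>) / \<epsilon>) \<psi>)
      \<le> - (c / \<kappa>t^2) * (\<kappa>t * sqrt (\<delta> \<epsilon>) / \<epsilon>)^2"
  proof eventually_elim
    case (elim \<epsilon>)
    have "c * (sqrt (\<delta> \<epsilon>) / \<epsilon>)^2 = c / \<kappa>t^2 * (\<kappa>t * sqrt (\<delta> \<epsilon>) / \<epsilon>)^2"
      using \<open>\<kappa>t > 0\<close> by (simp add: power_mult_distrib power_divide)
    then show ?case using INF_le[OF elim] by simp
  qed
  moreover have "c / \<kappa>t^2 > 0" using \<open>c > 0\<close> \<open>\<kappa>t > 0\<close> by simp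
  ultimately show ?thesis using that by blast
qed

lemma minimizer_asymptotics:
  fixes \<delta> \<kappa> :: "real \<Rightarrow> real" and v \<phi> :: "real \<Rightarrow> real \<Rightarrow> real"
  defines "m \<equiv> \<lambda>\<epsilon>. INF \<psi>\<in>J_class. F (\<epsilon> / sqrt (\<delta> \<epsilon>)) (\<kappa> \<epsilon>) \<psi>"
  assumes min: "\<forall>\<^sub>F \<epsilon> in at_right 0. nonneg_minimizer \<epsilon> (\<delta> \<epsilon>) (\<kappa> \<epsilon>) (v \<epsilon>) (\<phi> \<epsilon>)"
    and dpos: "\<forall>\<^sub>F \<epsilon> in at_right 0. 0 < \<delta> \<epsilon>" and \<kappa>: "\<forall>\<^sub>F \<epsilon> in at_right 0. 0 \<le> \<kappa> \<epsilon>"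
    and "c > 0" and m_neg: "\<forall>\<^sub>F \<epsilon> in at_right 0. m \<epsilon> \<le> - c * (\<kappa> \<epsilon>)^2"
    and lim: "((\<lambda>\<epsilon>. \<kappa> \<epsilon> * sqrt \<epsilon>) \<longlongrightarrow> 0) (at_right 0)"
  shows "(\<lambda>\<epsilon>. G \<epsilon> (\<delta> \<epsilon>) (\<kappa> \<epsilon>) (v \<epsilon>) (\<phi> \<epsilon>) - G \<epsilon> (\<delta> \<epsilon>) (\<kappa> \<epsilon>) (\<lambda>_. 1) (\<phi> \<epsilon>))
      \<in> o[at_right 0](\<lambda>\<epsilon>. G \<epsilon> (\<delta> \<epsilon>) (\<kappa> \<epsilon>) (\<lambda>_. 1) (\<phi> \<epsilon>))"
    "(\<lambda>\<epsilon>. G \<epsilon> (\<delta> \<epsilon>) (\<kappa> \<epsilon>) (v \<epsilon>) (\<phi> \<epsilon>) - m \<epsilon>) \<in> o[at_right 0](m)"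
    "\<forall>\<^sub>F \<epsilon> in at_right 0. GL_energy \<epsilon> (v \<epsilon>) \<le> 128 * \<epsilon> * (\<kappa> \<epsilon>)^4"
proof -
  have lim16: "((\<lambda>\<epsilon>. 16 * (\<kappa> \<epsilon> * sqrt \<epsilon>)) \<longlongrightarrow> 0) (at_right 0)"
    using tendsto_mult_right_zero[OF lim, of 16] .
  have "\<forall>\<^sub>F \<epsilon> in at_right (0::real). 0 < \<epsilon> \<and> \<epsilon> \<le> 1"
    unfolding eventually_at_right_field by (intro exI[of _ 1]) auto
  then have est: "\<forall>\<^sub>F \<epsilon> in at_right 0.
      G \<epsilon> (\<delta> \<epsilon>) (\<kappa> \<epsilon>) (v \<epsilon>) (\<phi> \<epsilon>) \<le> m \<epsilon> \<and> m \<epsilon> - G \<epsilon> (\<delta> \<epsilon>) (\<kappa> \<epsilon>) (v \<epsilon>) (\<phi> \<epsilon>) \<le> 16 * (\<kappa> \<epsilon> * sqrt \<epsilon>) * (\<kappa> \<epsilon>)^2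
      \<and> m \<epsilon> \<le> G \<epsilon> (\<delta> \<epsilon>) (\<kappa> \<epsilon>) (\<lambda>_. 1) (\<phi> \<epsilon>) \<and> G \<epsilon> (\<delta> \<epsilon>) (\<kappa> \<epsilon>) (\<lambda>_. 1) (\<phi> \<epsilon>) - m \<epsilon> \<le> 16 * (\<kappa> \<epsilon> * sqrt \<epsilon>) * (\<kappa> \<epsilon>)^2
      \<and> m \<epsilon> \<le> - c * (\<kappa> \<epsilon>)^2 \<and> 0 \<le> (\<kappa> \<epsilon>)^2 \<and> GL_energy \<epsilon> (v \<epsilon>) \<le> 128 * \<epsilon> * (\<kappa> \<epsilon>)^4"
    using min dpos \<kappa> m_neg order_tendstoD(2)[OF lim16, of "1/2", simplified]
  proof eventually_elim
    case (elim \<epsilon>)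
    have "m \<epsilon> \<le> 0"
      using elim(5) mult_nonneg_nonneg[OF less_imp_le[OF \<open>c > 0\<close>] zero_le_power2[of "\<kappa> \<epsilon>"]] by linarith
    then show ?case
      using minimizer_estimates[OF elim(2)] elim(1,3,4,5,6) unfolding m_def by simp
  qed
  have "\<forall>\<^sub>F \<epsilon> in at_right 0.
      G \<epsilon> (\<delta> \<epsilon>) (\<kappa> \<epsilon>) (v \<epsilon>) (\<phi> \<epsilon>) \<le> m \<epsilon> \<and> m \<epsilon> - G \<epsilon> (\<delta> \<epsilon>) (\<kappa> \<epsilon>) (v \<epsilon>) (\<phi> \<epsilon>) \<le> 16 * (\<kappa> \<epsilon> * sqrt \<epsilon>) * (\<kappa> \<epsilon>)^2
      \<and> m \<epsilon> \<le> G \<epsilon> (\<delta> \<epsilon>) (\<kappa> \<epsilon>) (\<lambda>_. 1) (\<phi> \<epsilon>) \<and> G \<epsilon> (\<delta> \<epsilon>) (\<kappa> \<epsilon>) (\<lambda>_. 1) (\<phi> \<epsilon>) - m \<epsilon> \<le> 16 * (\<kappa> \<epsilon> * sqrt \<epsilon>) * (\<kappa> \<epsilon>)^2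
      \<and> m \<epsilon> \<le> - c * (\<kappa> \<epsilon>)^2 \<and> 0 \<le> (\<kappa> \<epsilon>)^2"
    using est by eventually_elim simp
  from smallo_of_squeeze[OF \<open>c > 0\<close> lim16 this]
  show "(\<lambda>\<epsilon>. G \<epsilon> (\<delta> \<epsilon>) (\<kappa> \<epsilon>) (v \<epsilon>) (\<phi> \<epsilon>) - G \<epsilon> (\<delta> \<epsilon>) (\<kappa> \<epsilon>) (\<lambda>_. 1) (\<phi> \<epsilon>))
      \<in> o[at_right 0](\<lambda>\<epsilon>. G \<epsilon> (\<delta> \<epsilon>) (\<kappa> \<epsilon>) (\<lambda>_. 1) (\<phi> \<epsilon>))"
    "(\<lambda>\<epsilon>. G \<epsilon> (\<delta> \<epsilon>) (\<kappa> \<epsilon>) (v \<epsilon>) (\<phi> \<epsilon>) - m \<epsilon>) \<in> o[at_right 0](m)" by blast+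
  show "\<forall>\<^sub>F \<epsilon> in at_right 0. GL_energy \<epsilon> (v \<epsilon>) \<le> 128 * \<epsilon> * (\<kappa> \<epsilon>)^4"
    using est by eventually_elim simp
qed

lemma minimizer_energy_bigo:
  fixes \<delta> :: "real \<Rightarrow> real" and v :: "real \<Rightarrow> real \<Rightarrow> real"
  assumes "\<delta> \<in> O[at_right 0](\<lambda>\<epsilon>. \<epsilon> powr (3/2))" and dpos: "\<forall>\<^sub>F \<epsilon> in at_right 0. 0 < \<delta> \<epsilon>"
    and "\<kappa>t > 0" and energy: "\<forall>\<^sub>F \<epsilon> in at_right 0. GL_energy \<epsilon> (v \<epsilon>) \<le> 128 * \<epsilon> * (\<kappa>t * sqrt (\<delta> \<epsilon>) / \<epsilon>)^4"
  shows "(\<lambda>\<epsilon>. (LINT x:{0..1}|lborel. (wderiv01 (v \<epsilon>) x)^2)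
      + 1/(4*\<epsilon>^2) * (LINT x:{0..1}|lborel. ((v \<epsilon> x)^2 - 1)^2)) \<in> O[at_right 0](\<lambda>\<epsilon>. sqrt (\<delta> \<epsilon>) / \<epsilon>)"
proof (rule bigo_of_sq_div_cube[OF assms(1) dpos, of "256 * \<kappa>t^4"])
  show "0 < 256 * \<kappa>t^4" using \<open>\<kappa>t > 0\<close> by simp
  show "\<forall>\<^sub>F \<epsilon> in at_right 0. 0 \<le> (LINT x:{0..1}|lborel. (wderiv01 (v \<epsilon>) x)^2)
      + 1/(4*\<epsilon>^2) * (LINT x:{0..1}|lborel. ((v \<epsilon> x)^2 - 1)^2) \<and>
    (LINT x:{0..1}|lborel. (wderiv01 (v \<epsilon>) x)^2) + 1/(4*\<epsilon>^2) * (LINT x:{0..1}|lborel. ((v \<epsilon> x)^2 - 1)^2)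
      \<le> 256 * \<kappa>t^4 * (\<delta> \<epsilon>)^2 / \<epsilon>^3"
    using energy dpos eventually_at_right_less[of 0]
  proof eventually_elim
    case (elim \<epsilon>)
    have "(sqrt (\<delta> \<epsilon>))^4 = ((sqrt (\<delta> \<epsilon>))^2)^2" by (simp flip: power_mult)
    then have "(sqrt (\<delta> \<epsilon>))^4 = (\<delta> \<epsilon>)^2" using elim(2) by simp
    then have "2 * (128 * \<epsilon> * (\<kappa>t * sqrt (\<delta> \<epsilon>) / \<epsilon>)^4) = 256 * \<kappa>t^4 * (\<delta> \<epsilon>)^2 / \<epsilon>^3"
      using elim(3) by (simp add: power_mult_distrib power_divide field_simps power4_eq_xxxx power3_eq_cube)
    then show ?case using energy_le_twice_GL_energy[OF elim(3), of "v \<epsilon>"] elim(1) by linarith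
  qed
qed

theorem proposition18:
  fixes \<delta> :: "real \<Rightarrow> real" and \<kappa>t :: real
    and v \<phi> :: "real \<Rightarrow> real \<Rightarrow> real"
  assumes kt: "\<kappa>t > 1 / pi"
    and dpos: "\<forall>\<^sub>F \<epsilon> in at_right 0. \<delta> \<epsilon> > 0"
    and d1: "(\<lambda>\<epsilon>. \<epsilon>^2) \<in> o[at_right 0](\<delta>)"
    and d2: "\<delta> \<in> o[at_right 0](\<lambda>\<epsilon>. \<epsilon>)"
    and mini: "\<forall>\<^sub>F \<epsilon> in at_right 0.
        admissible (v \<epsilon>) (\<phi> \<epsilon>) \<and> (\<forall>x\<in>{0..1}. v \<epsilon> x \<ge> 0) \<and>
        (\<forall>w \<psi>. admissible w \<psi> \<longrightarrow>
           G \<epsilon> (\<delta> \<epsilon>) (\<kappa>t * sqrt (\<delta> \<epsilon>) / \<epsilon>) (v \<epsilon>) (\<phi> \<epsilon>)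
             \<le> G \<epsilon> (\<delta> \<epsilon>) (\<kappa>t * sqrt (\<delta> \<epsilon>) / \<epsilon>) w \<psi>)"
  shows "((\<lambda>\<epsilon>. G \<epsilon> (\<delta> \<epsilon>) (\<kappa>t * sqrt (\<delta> \<epsilon>) / \<epsilon>) (v \<epsilon>) (\<phi> \<epsilon>)
              - G \<epsilon> (\<delta> \<epsilon>) (\<kappa>t * sqrt (\<delta> \<epsilon>) / \<epsilon>) (\<lambda>_. 1) (\<phi> \<epsilon>))
           \<in> o[at_right 0](\<lambda>\<epsilon>. G \<epsilon> (\<delta> \<epsilon>) (\<kappa>t * sqrt (\<delta> \<epsilon>) / \<epsilon>) (\<lambda>_. 1) (\<phi> \<epsilon>)))
     \<and> ((\<lambda>\<epsilon>. G \<epsilon> (\<delta> \<epsilon>) (\<kappa>t * sqrt (\<delta> \<epsilon>) / \<epsilon>) (v \<epsilon>) (\<phi> \<epsilon>)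
              - (INF \<psi>\<in>J_class. F (\<epsilon> / sqrt (\<delta> \<epsilon>)) (\<kappa>t * sqrt (\<delta> \<epsilon>) / \<epsilon>) \<psi>))
           \<in> o[at_right 0](\<lambda>\<epsilon>. INF \<psi>\<in>J_class. F (\<epsilon> / sqrt (\<delta> \<epsilon>)) (\<kappa>t * sqrt (\<delta> \<epsilon>) / \<epsilon>) \<psi>))
     \<and> (\<delta> \<in> O[at_right 0](\<lambda>\<epsilon>. \<epsilon> powr (3/2)) \<longrightarrow>
         (\<lambda>\<epsilon>. (LINT x:{0..1}|lborel. (wderiv01 (v \<epsilon>) x)^2)
               + 1/(4*\<epsilon>^2) * (LINT x:{0..1}|lborel. ((v \<epsilon> x)^2 - 1)^2))
           \<in> O[at_right 0](\<lambda>\<epsilon>. sqrt (\<delta> \<epsilon>) / \<epsilon>))"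
proof -
  have "\<kappa>t > 0" using kt by (smt (verit) pi_gt_zero divide_pos_pos)
  define \<kappa> where "\<kappa> \<epsilon> = \<kappa>t * sqrt (\<delta> \<epsilon>) / \<epsilon>" for \<epsilon>
  obtain c where "c > 0"
    and neg: "\<forall>\<^sub>F \<epsilon> in at_right 0. (INF \<psi>\<in>J_class. F (\<epsilon> / sqrt (\<delta> \<epsilon>)) (\<kappa> \<epsilon>) \<psi>) \<le> - c * (\<kappa> \<epsilon>)^2"
    using eventually_INF_F_le_neg[OF kt d1 dpos] unfolding \<kappa>_def by blast
  have min: "\<forall>\<^sub>F \<epsilon> in at_right 0. nonneg_minimizer \<epsilon> (\<delta> \<epsilon>) (\<kappa> \<epsilon>) (v \<epsilon>) (\<phi> \<epsilon>)"
    using mini unfolding nonneg_minimizer_def \<kappa>_def by simp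
  have "\<forall>\<^sub>F \<epsilon> in at_right 0. 0 \<le> \<kappa> \<epsilon>"
    using eventually_at_right_less[of 0] dpos
    by eventually_elim (use \<open>\<kappa>t > 0\<close> in \<open>simp add: \<kappa>_def\<close>)
  note asymptotics = minimizer_asymptotics[OF min dpos this \<open>c > 0\<close> neg
      tendsto_kappa_sqrt[OF d2 dpos, of \<kappa>t, folded \<kappa>_def]]
  show ?thesis
    using asymptotics(1,2) minimizer_energy_bigo[OF _ dpos \<open>\<kappa>t > 0\<close> asymptotics(3)[unfolded \<kappa>_def]]
    unfolding \<kappa>_def by blast
qed

end
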